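(* Under the standing assumptions below, for every $\gamma\in\mathbb R^I$, $x_0\in\mathcal X$, $s_0\in\mathcal S$, the ex-ante lottery problem for $(\gamma,x_0,s_0)$ admits a maximizer $P^*\in\mathcal P(\tilde{\mathcal A}^\infty(x_0))$.
   Context: Setup. Let $\mathcal S$ be a finite set and $(s_t)_{t\ge0}$ a Markov chain on $\mathcal S$ with transition probabilities $\pi(s'|s)>0$ for all $s,s'\in\mathcal S$; for $s^t=(s_0,\dots,s_t)\in\mathcal S^{t+1}$, $\mathbb E_{s^t}$ denotes expectation over future shocks given $s^t$. Let $\mathcal A\subset\mathbb R^n$ be a finite set, $\mathcal X\subseteq\mathbb R^m$ a countable set, $\zeta:\mathcal X\times\mathcal A\times\mathcal S\to\mathcal X$, $p:\mathcal X\times\mathcal A\times\mathcal S\to\mathbb R$, $r,g^1,\dots,g^I$ bounded real functions on $\mathcal X\times\mathcal A\times\mathcal S$, $\bar g^i\in\mathbb R$, $\beta\in(0,1)$. A plan is $a=(a(s^t))_{t,s^t}$, $a(s^t)\in\mathcal A$, inducing $x(s^0)=x_0$, $x(s^{t+1})=\zeta(x(s^t),a(s^t),s_t)$. $\tilde{\mathcal A}(x,s)=\{a\in\mathcal A:p(x,a,s)\ge0\}$; $\tilde{\mathcal A}^\infty(x_0)$ is the set of plans with $a(s^t)\in\tilde{\mathcal A}(x(s^t),s_t)$ for all $t,s^t$. A plan is feasible for $(x_0,s_0)$ if it lies in $\tilde{\mathcal A}^\infty(x_0)$ and $\mathbb E_{s^t}\sum_{n\ge0}\beta^ng^i(x(s^{t+n}),a(s^{t+n}),s_{t+n})\ge\bar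 g^i$ for all $t,s^t,i$. Standing assumption: for every $(x_0,s_0)$ a feasible plan exists. Pre-action histories: $\mathcal H^t=\mathcal S^{t+1}\times\mathcal A^t$. Ex-ante lottery problem. Give $\tilde{\mathcal A}^\infty(x_0)$ the product topology and let $\mathcal P(\tilde{\mathcal A}^\infty(x_0))$ be the set of Borel probability measures on it; a random plan $a\sim P$ is drawn independently of the shocks. For $\gamma\in\mathbb R^I$, the ex-ante lottery problem is to maximize $\mathbb E^{a\sim P}_{s_0}\sum_{t\ge0}\beta^t\big(r(x(s^t),a(s^t),s_t)+\sum_i\gamma^ig^i(x(s^t),a(s^t),s_t)\big)$ over $P\in\mathcal P(\tilde{\mathcal A}^\infty(x_0))$ subject to: for all $t\ge0$, all $h^t=(s_0,\tilde a_0,\dots,s_{t-1},\tilde a_{t-1},s_t)\in\mathcal H^t$ and all $i$, $\mathbb E^{a\sim P}_{s^t}\Big[\mathbf 1\{(a(s^0),\dots,a(s^{t-1}))=(\tilde a_0,\dots,\tilde a_{t-1})\}\Big(\sum_{n\ge0}\beta^ng^i(x(s^{t+n}),a(s^{t+n}),s_{t+n})-\bar g^i\Big)\Big]\ge0$, where $s^t$ is the shock history contained in $h^t$ and the expectation is over $a\sim P$ and future shocks given $s^t$. *)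

theory Defs
  imports "HOL-Analysis.Analysis" "HOL-Probability.Probability"
begin

definition borel_of :: "'a topology \<Rightarrow> 'a measure" where
  "borel_of T = sigma (topspace T) {U. openin T U}"

text \<open>Shock histories s^t = (s_0,...,s_t) are nonempty lists [s_0,...,s_t].
  Plans are functions on the set of all shock histories.\<close>
definition hists :: "'s list set" where
  "hists = {hs. hs \<noteq> []}"

fun xrev :: "('x \<Rightarrow> 'a \<Rightarrow> 's \<Rightarrow> 'x) \<Rightarrow> 'x \<Rightarrow> ('s list \<Rightarrow> 'a) \<Rightarrow> 's list \<Rightarrow> 'x" where
  "xrev \<zeta> x0 a [] = x0"
| "xrev \<zeta> x0 a [s] = x0"
| "xrev \<zeta> x0 a (s # s' # rs) = \<zeta> (xrev \<zeta> x0 a (s' # rs)) (a (rev (s' # rs))) s'"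

text \<open>x(s^t) induced by plan a from x_0: x([s0]) = x0, x(s^{t+1}) = zeta(x(s^t), a(s^t), s_t).\<close>
definition xpath :: "('x \<Rightarrow> 'a \<Rightarrow> 's \<Rightarrow> 'x) \<Rightarrow> 'x \<Rightarrow> ('s list \<Rightarrow> 'a) \<Rightarrow> 's list \<Rightarrow> 'x" where
  "xpath \<zeta> x0 a hs = xrev \<zeta> x0 a (rev hs)"

text \<open>Probability of the continuation ys = (s_{t+1},...,s_{t+n}) from current shock s.
  pi s s' is the transition probability pi(s'|s).\<close>
fun path_prob :: "('s \<Rightarrow> 's \<Rightarrow> real) \<Rightarrow> 's \<Rightarrow> 's list \<Rightarrow> real" where
  "path_prob \<pi> s [] = 1"
| "path_prob \<pi> s (y # ys) = \<pi> s y * path_prob \<pi> y ys"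

definition cond_exp :: "('s::finite \<Rightarrow> 's \<Rightarrow> real) \<Rightarrow> 's list \<Rightarrow> nat \<Rightarrow> ('s list \<Rightarrow> real) \<Rightarrow> real" where
  "cond_exp \<pi> hs n F = (\<Sum>ys\<in>{ys. length ys = n}. path_prob \<pi> (last hs) ys * F (hs @ ys))"

definition disc_exp :: "('s::finite \<Rightarrow> 's \<Rightarrow> real) \<Rightarrow> real \<Rightarrow> 's list \<Rightarrow> ('s list \<Rightarrow> real) \<Rightarrow> real" where
  "disc_exp \<pi> \<beta> hs F = (\<Sum>n. \<beta> ^ n * cond_exp \<pi> hs n F)"

definition value_of :: "('s::finite \<Rightarrow> 's \<Rightarrow> real) \<Rightarrow> real \<Rightarrow> ('x \<Rightarrow> 'a \<Rightarrow> 's \<Rightarrow> 'x) \<Rightarrow> 'x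
    \<Rightarrow> ('x \<Rightarrow> 'a \<Rightarrow> 's \<Rightarrow> real) \<Rightarrow> ('s list \<Rightarrow> 'a) \<Rightarrow> 's list \<Rightarrow> real" where
  "value_of \<pi> \<beta> \<zeta> x0 f a hs = disc_exp \<pi> \<beta> hs (\<lambda>h. f (xpath \<zeta> x0 a h) (a h) (last h))"

definition Atil :: "'a set \<Rightarrow> ('x \<Rightarrow> 'a \<Rightarrow> 's \<Rightarrow> real) \<Rightarrow> 'x \<Rightarrow> 's \<Rightarrow> 'a set" where
  "Atil A p x s = {a\<in>A. p x a s \<ge> 0}"

definition Atil_inf :: "'a set \<Rightarrow> ('x \<Rightarrow> 'a \<Rightarrow> 's \<Rightarrow> 'x) \<Rightarrow> ('x \<Rightarrow> 'a \<Rightarrow> 's \<Rightarrow> real) \<Rightarrow> 'x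
    \<Rightarrow> ('s list \<Rightarrow> 'a) set" where
  "Atil_inf A \<zeta> p x0 = {a \<in> (\<Pi>\<^sub>E hs\<in>hists. A).
      \<forall>hs\<in>hists. a hs \<in> Atil A p (xpath \<zeta> x0 a hs) (last hs)}"

definition feasible_plan where
  "feasible_plan \<pi> \<beta> A \<zeta> p I g gbar x0 s0 a \<longleftrightarrow>
     a \<in> Atil_inf A \<zeta> p x0 \<and>
     (\<forall>hs\<in>hists. hd hs = s0 \<longrightarrow> (\<forall>i<I. value_of \<pi> \<beta> \<zeta> x0 (g i) a hs \<ge> gbar i))"

definition plan_lotteries :: "('a::topological_space) set \<Rightarrow> ('x \<Rightarrow> 'a \<Rightarrow> 's \<Rightarrow> 'x)
    \<Rightarrow> ('x \<Rightarrow> 'a \<Rightarrow> 's \<Rightarrow> real) \<Rightarrow> 'x \<Rightarrow> ('s list \<Rightarrow> 'a) measure set" where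
  "plan_lotteries A \<zeta> p x0 = {P. prob_space P \<and>
     space P = Atil_inf A \<zeta> p x0 \<and>
     sets P = sets (borel_of (subtopology (product_topology (\<lambda>_. top_of_set A) hists)
                                         (Atil_inf A \<zeta> p x0)))}"

text \<open>Constraints of the ex-ante lottery problem, for all h^t = (s^t, (a_0,...,a_{t-1})).\<close>
definition lottery_constraints where
  "lottery_constraints \<pi> \<beta> A \<zeta> I g gbar x0 P \<longleftrightarrow>
     (\<forall>hs\<in>hists. \<forall>as. length as = length hs - 1 \<longrightarrow> set as \<subseteq> A \<longrightarrow> (\<forall>i<I.
        (\<integral>a. (if (\<forall>k < length as. a (take (Suc k) hs) = as ! k) then 1 else 0)
              * (value_of \<pi> \<beta> \<zeta> x0 (g i) a hs - gbar i) \<partial>P) \<ge> 0))"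

definition lottery_objective where
  "lottery_objective \<pi> \<beta> \<zeta> r I g \<gamma> x0 s0 P =
     (\<integral>a. value_of \<pi> \<beta> \<zeta> x0 (\<lambda>x b s. r x b s + (\<Sum>i<I. \<gamma> i * g i x b s)) a [s0] \<partial>P)"

end

theory Submission
  imports Defs
begin

text \<open>Admissible plans form a closed subset of the compact metrizable product of the finite
  action set over the countably many shock histories. Discounting makes the objective and every
  constraint integrand uniformly continuous on it: up to \<open>\<beta> ^ M\<close> they only depend on the actions
  at histories of length at most \<open>M\<close>. So a maximizing sequence of feasible lotteries has a weakly
  convergent subsequence, whose limit is feasible and optimal.

  Instead of Prokhorov's theorem we use Helly's selection theorem on the real line: plans are
  coded injectively by reals in \<open>[0, 1]\<close>, writing action indices as digits in base
  \<open>card A + 2\<close>. The coded distributions are tight, a weak limit gives no mass to the grid of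
  \<open>base\<close>-adic rationals, off which decoding is continuous, and decoding followed by a repair map
  onto admissible plans pulls the limit back to a lottery over plans.\<close>

section \<open>Discounted sums and conditional expectations\<close>

lemma discounted_summable:
  fixes \<beta> :: real
  assumes "0 \<le> \<beta>" "\<beta> < 1" "\<And>n. \<bar>c n\<bar> \<le> C"
  shows "summable (\<lambda>n. \<beta> ^ n * c n)"
proof (rule summable_comparison_test[where g="\<lambda>n. C * \<beta> ^ n"])
  have "\<bar>c n\<bar> * \<beta> ^ n \<le> C * \<beta> ^ n" for n
    using assms by (intro mult_right_mono) auto
  then show "\<exists>N. \<forall>n\<ge>N. norm (\<beta> ^ n * c n) \<le> C * \<beta> ^ n"
    using assms by (simp add: abs_mult mult.commute)
  show "summable (\<lambda>n. C * \<beta> ^ n)"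
    using assms by (intro summable_mult summable_geometric) auto
qed

lemma discounted_sum_abs_le:
  fixes \<beta> :: real
  assumes "0 \<le> \<beta>" "\<beta> < 1" "\<And>n. \<bar>c n\<bar> \<le> C"
  shows "\<bar>\<Sum>n. \<beta> ^ n * c n\<bar> \<le> C / (1 - \<beta>)"
proof -
  have "\<bar>\<beta> ^ n * c n\<bar> \<le> C * \<beta> ^ n" for n
    using assms mult_right_mono[OF assms(3)[of n], of "\<beta> ^ n"] by (simp add: abs_mult mult.commute)
  then have "\<bar>\<Sum>n. \<beta> ^ n * c n\<bar> \<le> (\<Sum>n. C * \<beta> ^ n)"
    using norm_suminf_le[of "\<lambda>n. \<beta> ^ n * c n" "\<lambda>n. C * \<beta> ^ n"] assms
    by (simp add: summable_mult summable_geometric)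
  also have "\<dots> = C / (1 - \<beta>)"
    using assms by (simp add: suminf_mult suminf_geometric)
  finally show ?thesis .
qed

lemma discounted_sum_diff_le:
  fixes \<beta> :: real
  assumes "0 \<le> \<beta>" "\<beta> < 1" "\<And>n. \<bar>c n\<bar> \<le> C" "\<And>n. \<bar>d n\<bar> \<le> C"
    and "\<And>n. n < M \<Longrightarrow> c n = d n"
  shows "\<bar>(\<Sum>n. \<beta> ^ n * c n) - (\<Sum>n. \<beta> ^ n * d n)\<bar> \<le> 2 * C * \<beta> ^ M / (1 - \<beta>)"
proof -
  define e where "e n = c (n + M) - d (n + M)" for n
  have e_le: "\<bar>e n\<bar> \<le> 2 * C" for n
    using assms(3,4)[of "n + M"] by (simp add: e_def)
  have sc: "summable (\<lambda>n. \<beta> ^ n * c n)" and sd: "summable (\<lambda>n. \<beta> ^ n * d n)"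
    using discounted_summable assms by blast+
  then have sum_diff: "summable (\<lambda>n. \<beta> ^ n * (c n - d n))"
    by (simp add: right_diff_distrib summable_diff)
  have "(\<Sum>n. \<beta> ^ n * c n) - (\<Sum>n. \<beta> ^ n * d n) = (\<Sum>n. \<beta> ^ n * (c n - d n))"
    using suminf_diff[OF sc sd] by (simp add: right_diff_distrib)
  also have "\<dots> = (\<Sum>n. \<beta> ^ M * (\<beta> ^ n * e n))"
    using suminf_minus_initial_segment[OF sum_diff, of M] assms(5)
    by (simp add: e_def power_add mult_ac)
  also have "\<dots> = \<beta> ^ M * (\<Sum>n. \<beta> ^ n * e n)"
    by (rule suminf_mult[OF discounted_summable[OF assms(1,2) e_le]])
  finally have "\<bar>(\<Sum>n. \<beta> ^ n * c n) - (\<Sum>n. \<beta> ^ n * d n)\<bar> = \<beta> ^ M * \<bar>\<Sum>n. \<beta> ^ n * e n\<bar>"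
    using assms by (simp add: abs_mult)
  also have "\<dots> \<le> \<beta> ^ M * (2 * C / (1 - \<beta>))"
    using mult_left_mono[OF discounted_sum_abs_le[of \<beta> e "2 * C", OF assms(1,2) e_le], of "\<beta> ^ M"]
      assms(1) by simp
  finally show ?thesis by (simp add: mult_ac)
qed

lemma path_prob_nonneg: "(\<And>s s'. \<pi> s s' \<ge> 0) \<Longrightarrow> path_prob \<pi> s ys \<ge> 0"
  by (induction ys arbitrary: s) auto

lemma sum_path_prob:
  fixes \<pi> :: "'s::finite \<Rightarrow> 's \<Rightarrow> real"
  assumes "\<And>s. (\<Sum>s'\<in>UNIV. \<pi> s s') = 1"
  shows "(\<Sum>ys\<in>{ys. length ys = n}. path_prob \<pi> s ys) = 1"
proof (induction n arbitrary: s)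
  case 0
  have "{ys::'s list. length ys = 0} = {[]}" by auto
  then show ?case by simp
next
  case (Suc n)
  have lists: "{ys::'s list. length ys = Suc n} = (\<lambda>(y, ys). y # ys) ` (UNIV \<times> {ys. length ys = n})"
    by (auto simp: length_Suc_conv image_iff)
  have inj: "inj_on (\<lambda>(y, ys). y # ys) (UNIV \<times> {ys::'s list. length ys = n})"
    by (auto simp: inj_on_def)
  have "(\<Sum>ys\<in>{ys. length ys = Suc n}. path_prob \<pi> s ys)
      = (\<Sum>(y, ys)\<in>UNIV \<times> {ys. length ys = n}. \<pi> s y * path_prob \<pi> y ys)"
    unfolding lists by (subst sum.reindex[OF inj]) (simp add: case_prod_unfold)
  also have "\<dots> = (\<Sum>y\<in>UNIV. \<pi> s y * (\<Sum>ys\<in>{ys. length ys = n}. path_prob \<pi> y ys))"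
    by (simp add: sum.cartesian_product[symmetric] sum_distrib_left)
  finally show ?case using assms Suc by simp
qed

lemma cond_exp_abs_le:
  fixes \<pi> :: "'s::finite \<Rightarrow> 's \<Rightarrow> real"
  assumes "\<And>s. (\<Sum>s'\<in>UNIV. \<pi> s s') = 1" "\<And>s s'. \<pi> s s' \<ge> 0"
    and "\<And>ys. length ys = n \<Longrightarrow> \<bar>F (hs @ ys)\<bar> \<le> C"
  shows "\<bar>cond_exp \<pi> hs n F\<bar> \<le> C"
proof -
  have "\<bar>cond_exp \<pi> hs n F\<bar> \<le> (\<Sum>ys\<in>{ys. length ys = n}. \<bar>path_prob \<pi> (last hs) ys * F (hs @ ys)\<bar>)"
    unfolding cond_exp_def by (rule sum_abs)
  also have "\<dots> \<le> (\<Sum>ys\<in>{ys. length ys = n}. path_prob \<pi> (last hs) ys * C)"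
    by (rule sum_mono) (auto simp: abs_mult path_prob_nonneg assms intro!: mult_left_mono)
  also have "\<dots> = C"
    by (simp add: sum_distrib_right[symmetric] sum_path_prob assms)
  finally show ?thesis .
qed

lemma xrev_cong:
  "(\<And>t u. rl = u @ t \<Longrightarrow> t \<noteq> [] \<Longrightarrow> a (rev t) = b (rev t)) \<Longrightarrow> xrev \<zeta> x0 a rl = xrev \<zeta> x0 b rl"
proof (induction \<zeta> x0 a rl rule: xrev.induct)
  case (3 \<zeta> x0 a s s' rs)
  have "xrev \<zeta> x0 a (s' # rs) = xrev \<zeta> x0 b (s' # rs)"
    by (rule 3(1)) (metis "3.prems" append_Cons)
  moreover have "a (rev (s' # rs)) = b (rev (s' # rs))"
    using 3(2)[of "[s]" "s' # rs"] by simp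
  ultimately show ?case by simp
qed auto

lemma xpath_cong:
  assumes "\<And>h'. h' \<noteq> [] \<Longrightarrow> (\<exists>u. h = h' @ u) \<Longrightarrow> a h' = b h'"
  shows "xpath \<zeta> x0 a h = xpath \<zeta> x0 b h"
  unfolding xpath_def
proof (rule xrev_cong)
  fix t u assume "rev h = u @ t" "t \<noteq> []"
  then have "h = rev t @ rev u" by (metis rev_append rev_rev_ident)
  then show "a (rev t) = b (rev t)" using assms \<open>t \<noteq> []\<close> by auto
qed

lemma xrev_in:
  assumes "x0 \<in> X" "\<And>x b s. x \<in> X \<Longrightarrow> b \<in> A \<Longrightarrow> \<zeta> x b s \<in> X"
    and "\<And>t. t \<noteq> [] \<Longrightarrow> a (rev t) \<in> A"
  shows "xrev \<zeta> x0 a rl \<in> X"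
proof (induction rl)
  case (Cons s rl)
  then show ?case
  proof (cases rl)
    case (Cons s' rs)
    have "a (rev (s' # rs)) \<in> A" using assms(3) by blast
    then show ?thesis using Cons.IH assms(2) Cons by simp
  qed (use assms in auto)
qed (use assms in auto)

section \<open>Uniform continuity on product spaces\<close>

text \<open>Uniform continuity for the product of the discrete uniformities on the coordinates.\<close>

definition prod_uniformly_continuous_on :: "('i \<Rightarrow> 'a) set \<Rightarrow> (('i \<Rightarrow> 'a) \<Rightarrow> real) \<Rightarrow> bool" where
  "prod_uniformly_continuous_on K f \<longleftrightarrow>
     (\<forall>\<epsilon>>0. \<exists>N. finite N \<and> (\<forall>a\<in>K. \<forall>b\<in>K. (\<forall>h\<in>N. a h = b h) \<longrightarrow> \<bar>f a - f b\<bar> \<le> \<epsilon>))"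

lemma prod_uniformly_continuous_on_diff_const:
  "prod_uniformly_continuous_on K f \<Longrightarrow> prod_uniformly_continuous_on K (\<lambda>a. f a - c)"
  unfolding prod_uniformly_continuous_on_def by simp

lemma prod_uniformly_continuous_on_mult_local:
  assumes f: "prod_uniformly_continuous_on K f" and "finite N\<^sub>G"
    and G: "\<And>a b. \<forall>h\<in>N\<^sub>G. a h = b h \<Longrightarrow> G a = G b" and G_le: "\<And>a. \<bar>G a\<bar> \<le> 1"
  shows "prod_uniformly_continuous_on K (\<lambda>a. G a * f a)"
  unfolding prod_uniformly_continuous_on_def
proof (intro allI impI)
  fix \<epsilon> :: real assume "\<epsilon> > 0"
  then obtain N where N: "finite N" "\<forall>a\<in>K. \<forall>b\<in>K. (\<forall>h\<in>N. a h = b h) \<longrightarrow> \<bar>f a - f b\<bar> \<le> \<epsilon>"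
    using f unfolding prod_uniformly_continuous_on_def by blast
  show "\<exists>N. finite N \<and> (\<forall>a\<in>K. \<forall>b\<in>K. (\<forall>h\<in>N. a h = b h) \<longrightarrow> \<bar>G a * f a - G b * f b\<bar> \<le> \<epsilon>)"
  proof (intro exI conjI ballI impI)
    show "finite (N \<union> N\<^sub>G)" using N \<open>finite N\<^sub>G\<close> by simp
    fix a b assume ab: "a \<in> K" "b \<in> K" "\<forall>h\<in>N \<union> N\<^sub>G. a h = b h"
    then have "G a = G b" using G by blast
    then have "\<bar>G a * f a - G b * f b\<bar> = \<bar>G a\<bar> * \<bar>f a - f b\<bar>"
      by (simp add: abs_mult[symmetric] right_diff_distrib)
    also have "\<dots> \<le> 1 * \<epsilon>"
      using ab N(2) G_le[of a] by (intro mult_mono) auto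
    finally show "\<bar>G a * f a - G b * f b\<bar> \<le> \<epsilon>" by simp
  qed
qed

lemma openin_top_of_set_finite_singleton:
  fixes A :: "'a::t1_space set"
  assumes "finite A" "b \<in> A"
  shows "openin (top_of_set A) {b}"
proof -
  have "closed (A - {b})" using assms(1) by (intro finite_imp_closed) auto
  then have "open (- (A - {b}))" by (simp only: open_Compl)
  moreover have "{b} = - (A - {b}) \<inter> A" using assms(2) by auto
  ultimately show ?thesis unfolding openin_open by blast
qed

lemma openin_product_cylinder:
  fixes A :: "'a::t1_space set"
  assumes "finite A" "finite N" "a \<in> (\<Pi>\<^sub>E h\<in>I. A)"
  shows "openin (product_topology (\<lambda>_. top_of_set A) I) (\<Pi>\<^sub>E h\<in>I. if h \<in> N then {a h} else A)"
  unfolding openin_PiE_gen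
proof (intro disjI2 conjI ballI)
  show "finite {h \<in> I. (if h \<in> N then {a h} else A) \<noteq> topspace (top_of_set A)}"
    by (rule finite_subset[OF _ \<open>finite N\<close>]) auto
  fix h assume "h \<in> I"
  then show "openin (top_of_set A) (if h \<in> N then {a h} else A)"
    using openin_top_of_set_finite_singleton[OF assms(1)] assms(3) by auto
qed

lemma openin_prod_uniformly_continuous_on_preimage:
  fixes A :: "'a::t1_space set"
  assumes A: "finite A" and K: "K \<subseteq> (\<Pi>\<^sub>E h\<in>I. A)"
    and f: "prod_uniformly_continuous_on K f" and S: "open S"
  shows "openin (subtopology (product_topology (\<lambda>_. top_of_set A) I) K) {a\<in>K. f a \<in> S}"
proof -
  define cyl where "cyl a N = (\<Pi>\<^sub>E h\<in>I. if h \<in> N then {a h} else A)" for a N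
  have cyl_open: "openin (product_topology (\<lambda>_. top_of_set A) I) (cyl a N)"
    if "finite N" "a \<in> K" for a N
    unfolding cyl_def using that K by (intro openin_product_cylinder[OF A]) auto
  have "\<exists>N. finite N \<and> (\<forall>b\<in>K. (\<forall>h\<in>N. a h = b h) \<longrightarrow> f b \<in> S)" if "a \<in> K" "f a \<in> S" for a
  proof -
    obtain e where e: "e > 0" "ball (f a) e \<subseteq> S" using S \<open>f a \<in> S\<close> openE by metis
    then obtain N where "finite N" "\<forall>b\<in>K. (\<forall>h\<in>N. a h = b h) \<longrightarrow> \<bar>f a - f b\<bar> \<le> e / 2"
      using f \<open>a \<in> K\<close> unfolding prod_uniformly_continuous_on_def by (meson half_gt_zero)
    then show ?thesis using e by (force simp: dist_real_def)
  qed
  then obtain N where N: "\<And>a. a \<in> K \<Longrightarrow> f a \<in> S \<Longrightarrow> finite (N a)"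
    "\<And>a b. a \<in> K \<Longrightarrow> f a \<in> S \<Longrightarrow> b \<in> K \<Longrightarrow> \<forall>h\<in>N a. a h = b h \<Longrightarrow> f b \<in> S"
    by metis
  have "{a\<in>K. f a \<in> S} = (\<Union>a\<in>{a\<in>K. f a \<in> S}. cyl a (N a)) \<inter> K"
  proof (intro equalityI subsetI)
    fix a assume "a \<in> {a\<in>K. f a \<in> S}"
    moreover have "a \<in> cyl a (N a)" using calculation K unfolding cyl_def by (auto simp: PiE_iff)
    ultimately show "a \<in> (\<Union>a\<in>{a\<in>K. f a \<in> S}. cyl a (N a)) \<inter> K" by blast
  next
    fix b assume "b \<in> (\<Union>a\<in>{a\<in>K. f a \<in> S}. cyl a (N a)) \<inter> K"
    then obtain a where a: "a \<in> K" "f a \<in> S" "b \<in> cyl a (N a)" "b \<in> K" by blast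
    have "a h = b h" if "h \<in> N a" for h
    proof (cases "h \<in> I")
      case True
      then show ?thesis using a(3) that unfolding cyl_def by (auto dest: PiE_mem)
    next
      case False
      then show ?thesis using a(1,4) K by (metis PiE_arb subsetD)
    qed
    then show "b \<in> {a\<in>K. f a \<in> S}" using N(2)[OF a(1,2,4)] a(4) by blast
  qed
  moreover have "openin (product_topology (\<lambda>_. top_of_set A) I) (\<Union>a\<in>{a\<in>K. f a \<in> S}. cyl a (N a))"
    using cyl_open N(1) by (intro openin_Union) auto
  ultimately show ?thesis unfolding openin_subtopology by blast
qed

lemma openin_product_subtopology_contains_cylinder:
  assumes U: "openin (subtopology (product_topology (\<lambda>_. top_of_set A) I) K) U"
    and "a \<in> U" and K: "K \<subseteq> (\<Pi>\<^sub>E h\<in>I. A)"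
  obtains N where "finite N" "N \<subseteq> I" "\<And>b. b \<in> K \<Longrightarrow> \<forall>h\<in>N. b h = a h \<Longrightarrow> b \<in> U"
proof -
  obtain V where V: "openin (product_topology (\<lambda>_. top_of_set A) I) V" "U = V \<inter> K"
    using U unfolding openin_subtopology by auto
  then obtain W where W: "finite {h \<in> I. W h \<noteq> A}" "a \<in> (\<Pi>\<^sub>E h\<in>I. W h)" "(\<Pi>\<^sub>E h\<in>I. W h) \<subseteq> V"
    using \<open>a \<in> U\<close> unfolding openin_product_topology_alt by auto
  have "b \<in> U" if "b \<in> K" "\<forall>h\<in>{h \<in> I. W h \<noteq> A}. b h = a h" for b
  proof -
    have "b h \<in> W h" if "h \<in> I" for h
    proof (cases "W h = A")
      case True
      then show ?thesis using K \<open>b \<in> K\<close> \<open>h \<in> I\<close> by blast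
    next
      case False
      then show ?thesis using \<open>\<forall>h\<in>{h \<in> I. W h \<noteq> A}. b h = a h\<close> W(2) \<open>h \<in> I\<close> by auto
    qed
    moreover have "b \<in> extensional I" using K \<open>b \<in> K\<close> by (auto simp: PiE_def)
    ultimately have "b \<in> (\<Pi>\<^sub>E h\<in>I. W h)" by (simp add: PiE_iff)
    then show ?thesis using W(3) V(2) \<open>b \<in> K\<close> by blast
  qed
  then show ?thesis using that W(1) by blast
qed

lemma topspace_product_subtopology:
  "K \<subseteq> (\<Pi>\<^sub>E h\<in>I. A) \<Longrightarrow> topspace (subtopology (product_topology (\<lambda>_. top_of_set A) I) K) = K"
  by auto

lemma space_borel_of: "space (borel_of T) = topspace T"
  unfolding borel_of_def by (rule space_measure_of) (auto dest: openin_subset)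

lemma sets_borel_of: "sets (borel_of T) = sigma_sets (topspace T) {U. openin T U}"
  unfolding borel_of_def by (rule sets_measure_of) (auto dest: openin_subset)

lemma prod_uniformly_continuous_on_measurable:
  fixes A :: "'a::t1_space set"
  assumes A: "finite A" and K: "K \<subseteq> (\<Pi>\<^sub>E h\<in>I. A)"
    and f: "prod_uniformly_continuous_on K f"
    and M: "space M = K" "sets M = sets (borel_of (subtopology (product_topology (\<lambda>_. top_of_set A) I) K))"
  shows "f \<in> borel_measurable M"
proof (rule borel_measurableI)
  fix S :: "real set" assume "open S"
  have "f -` S \<inter> space M = {a\<in>K. f a \<in> S}" using M by auto
  also have "\<dots> \<in> sets M"
    unfolding M sets_borel_of topspace_product_subtopology[OF K]
    using openin_prod_uniformly_continuous_on_preimage[OF A K f \<open>open S\<close>] by (auto intro: sigma_sets.Basic)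
  finally show "f -` S \<inter> space M \<in> sets M" .
qed

section \<open>Coding plans by real numbers\<close>

locale finite_alphabet =
  fixes A :: "'a set"
  assumes finite_A: "finite A" and A_nonempty: "A \<noteq> {}"
begin

definition action_index :: "'a \<Rightarrow> nat" where
  "action_index = (SOME h. bij_betw h A {0..<card A})"

lemma bij_betw_action_index: "bij_betw action_index A {0..<card A}"
  unfolding action_index_def using ex_bij_betw_finite_nat[OF finite_A] by (rule someI_ex)

lemma card_A_ge_1: "card A \<ge> 1"
  using A_nonempty finite_A by (simp add: Suc_le_eq card_gt_0_iff)

text \<open>Plans are written as base-\<open>(card A + 2)\<close> expansions with digits in \<open>{1..card A}\<close>. Since
  the digits \<open>0\<close> and \<open>card A + 1\<close> never occur, a code keeps a fixed distance from every
  grid point \<open>j / base ^ i\<close>, which is what makes decoding continuous at codes.\<close>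

definition digit_of :: "'a \<Rightarrow> nat" where
  "digit_of b = (if b \<in> A then action_index b + 1 else 1)"

definition base :: real where
  "base = real (card A + 2)"

definition code_digit :: "('i::countable \<Rightarrow> 'a) \<Rightarrow> nat \<Rightarrow> real" where
  "code_digit a k = real (digit_of (a (from_nat k)))"

definition code_tail :: "('i::countable \<Rightarrow> 'a) \<Rightarrow> nat \<Rightarrow> real" where
  "code_tail a i = (\<Sum>k. code_digit a (k + i) / base ^ Suc k)"

definition code :: "('i::countable \<Rightarrow> 'a) \<Rightarrow> real" where
  "code a = code_tail a 0"

fun code_prefix :: "('i::countable \<Rightarrow> 'a) \<Rightarrow> nat \<Rightarrow> int" where
  "code_prefix a 0 = 0"
| "code_prefix a (Suc i) = int (card A + 2) * code_prefix a i + int (digit_of (a (from_nat i)))"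

definition digit :: "nat \<Rightarrow> real \<Rightarrow> int" where
  "digit i y = \<lfloor>y * base ^ Suc i\<rfloor> mod int (card A + 2)"

definition action_of_digit :: "int \<Rightarrow> 'a" where
  "action_of_digit k =
     (if 1 \<le> k \<and> k \<le> int (card A) then inv_into A action_index (nat k - 1) else undefined)"

definition decode_raw :: "real \<Rightarrow> 'i::countable \<Rightarrow> 'a" where
  "decode_raw y h = action_of_digit (digit (to_nat h) y)"

definition grid :: "real set" where
  "grid = (\<Union>i. range (\<lambda>j::int. of_int j / base ^ i))"

lemma digit_of_bounds: "1 \<le> digit_of b" "digit_of b \<le> card A"
proof -
  show "1 \<le> digit_of b" by (simp add: digit_of_def)
  show "digit_of b \<le> card A"
  proof (cases "b \<in> A")
    case True
    then have "action_index b < card A" using bij_betw_action_index by (auto simp: bij_betw_def)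
    then show ?thesis using True by (simp add: digit_of_def)
  qed (use card_A_ge_1 in \<open>simp add: digit_of_def\<close>)
qed

lemma code_digit_bounds: "1 \<le> code_digit a k" "code_digit a k \<le> real (card A)"
  using digit_of_bounds by (simp_all add: code_digit_def)

lemma base_ge_3: "base \<ge> 3"
  using card_A_ge_1 by (simp add: base_def)

lemma sums_over_base_powers: "(\<lambda>k. c / base ^ Suc k) sums (c / (base - 1))"
proof -
  have "(\<lambda>k. (1 / base) ^ k) sums (1 / (1 - 1 / base))"
    using base_ge_3 by (intro geometric_sums) auto
  then have "(\<lambda>k. (c / base) * (1 / base) ^ k) sums ((c / base) * (1 / (1 - 1 / base)))"
    by (rule sums_mult)
  moreover have "(c / base) * (1 / (1 - 1 / base)) = c / (base - 1)"
    using base_ge_3 by (simp add: field_simps)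
  moreover have "(\<lambda>k. (c / base) * (1 / base) ^ k) = (\<lambda>k. c / base ^ Suc k)"
    by (simp add: power_divide)
  ultimately show ?thesis by metis
qed

lemma summable_code_tail: "summable (\<lambda>k. code_digit a (k + i) / base ^ Suc k)"
proof (rule summable_comparison_test[where g="\<lambda>k. real (card A) / base ^ Suc k"])
  have "norm (code_digit a (n + i) / base ^ Suc n) \<le> real (card A) / base ^ Suc n" for n
    using code_digit_bounds[of a "n + i"] base_ge_3 by (auto intro!: divide_right_mono)
  then show "\<exists>N. \<forall>n\<ge>N. norm (code_digit a (n + i) / base ^ Suc n) \<le> real (card A) / base ^ Suc n"
    by blast
  show "summable (\<lambda>k. real (card A) / base ^ Suc k)"
    using sums_over_base_powers sums_summable by blast
qed

lemma code_tail_bounds: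
  "1 / (base - 1) \<le> code_tail a i" "code_tail a i \<le> 1 - 1 / (base - 1)"
proof -
  have "(\<Sum>k. 1 / base ^ Suc k) \<le> code_tail a i"
    unfolding code_tail_def
    by (intro suminf_le divide_right_mono summable_code_tail sums_summable[OF sums_over_base_powers])
      (use code_digit_bounds base_ge_3 in auto)
  then show "1 / (base - 1) \<le> code_tail a i"
    using sums_over_base_powers[of 1] sums_unique by metis
  have "code_tail a i \<le> (\<Sum>k. real (card A) / base ^ Suc k)"
    unfolding code_tail_def
    by (intro suminf_le divide_right_mono summable_code_tail sums_summable[OF sums_over_base_powers])
      (use code_digit_bounds base_ge_3 in auto)
  moreover have "real (card A) / (base - 1) = 1 - 1 / (base - 1)"
    using base_ge_3 by (simp add: base_def field_simps)
  ultimately show "code_tail a i \<le> 1 - 1 / (base - 1)"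
    using sums_over_base_powers[of "real (card A)"] sums_unique by metis
qed

lemma code_tail_strict_bounds: "0 < code_tail a i" "code_tail a i < 1"
proof -
  have "0 < 1 / (base - 1)" using base_ge_3 by simp
  then show "0 < code_tail a i" "code_tail a i < 1"
    using code_tail_bounds[of a i] by linarith+
qed

lemma code_tail_Suc: "base * code_tail a i = code_digit a i + code_tail a (Suc i)"
proof -
  define f where "f k = code_digit a (k + i) / base ^ Suc k" for k
  have sf: "summable f" unfolding f_def by (rule summable_code_tail)
  have "code_tail a (Suc i) / base = (\<Sum>k. code_digit a (k + Suc i) / base ^ Suc k / base)"
    unfolding code_tail_def by (rule suminf_divide[OF summable_code_tail, symmetric])
  also have "\<dots> = (\<Sum>k. f (Suc k))"
    by (simp add: f_def divide_divide_eq_left mult_ac)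
  also have "\<dots> = suminf f - f 0"
    by (rule suminf_split_head[OF sf])
  also have "\<dots> = code_tail a i - code_digit a i / base"
    by (simp add: f_def[abs_def] code_tail_def)
  finally show ?thesis using base_ge_3 by (simp add: field_simps)
qed

lemma code_times_base_power: "code a * base ^ i = of_int (code_prefix a i) + code_tail a i"
proof (induction i)
  case 0
  then show ?case by (simp add: code_def)
next
  case (Suc i)
  have "code a * base ^ Suc i = base * (code a * base ^ i)" by simp
  also have "\<dots> = base * of_int (code_prefix a i) + (code_digit a i + code_tail a (Suc i))"
    using Suc code_tail_Suc[of a i] by (simp add: distrib_left)
  also have "\<dots> = of_int (code_prefix a (Suc i)) + code_tail a (Suc i)"
    by (simp add: base_def code_digit_def)
  finally show ?case .
qed

lemma floor_code_times_base_power: "\<lfloor>code a * base ^ i\<rfloor> = code_prefix a i"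
  using code_times_base_power[of a i] code_tail_strict_bounds[of a i] by (intro floor_unique) auto

lemma digit_code: "digit i (code a) = int (digit_of (a (from_nat i)))"
proof -
  have "digit i (code a) = int (digit_of (a (from_nat i))) mod int (card A + 2)"
    unfolding digit_def floor_code_times_base_power by simp
  also have "\<dots> = int (digit_of (a (from_nat i)))"
    using digit_of_bounds[of "a (from_nat i)"] by (intro mod_pos_pos_trivial) auto
  finally show ?thesis .
qed

lemma decode_raw_code:
  assumes "a h \<in> A"
  shows "decode_raw (code a) h = a h"
proof -
  have "digit (to_nat h) (code a) = int (action_index (a h) + 1)"
    using assms by (simp add: digit_code digit_of_def)
  moreover have "action_index (a h) < card A"
    using assms bij_betw_action_index by (auto simp: bij_betw_def)
  moreover have "nat (int (action_index (a h) + 1)) - 1 = action_index (a h)"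
    by (simp only: nat_int)
  ultimately have "decode_raw (code a) h = inv_into A action_index (action_index (a h))"
    unfolding decode_raw_def action_of_digit_def by simp
  then show ?thesis using assms bij_betw_action_index by (simp add: bij_betw_inv_into_left)
qed

lemma code_bounds: "0 \<le> code a" "code a \<le> 1"
  using code_tail_strict_bounds[of a 0] by (auto simp: code_def)

lemma code_grid_distance: "1 / ((base - 1) * base ^ i) \<le> \<bar>code a - of_int j / base ^ i\<bar>"
proof -
  have pos: "base ^ i > 0" using base_ge_3 by simp
  have "1 / (base - 1) \<le> \<bar>of_int (code_prefix a i) + code_tail a i - of_int j\<bar>"
  proof (cases "j \<le> code_prefix a i")
    case True
    then show ?thesis using code_tail_bounds(1)[of a i] by linarith
  next
    case False
    then have "of_int j \<ge> (of_int (code_prefix a i) :: real) + 1" by simp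
    then show ?thesis using code_tail_bounds(2)[of a i] by linarith
  qed
  also have "\<dots> = \<bar>(code a - of_int j / base ^ i) * base ^ i\<bar>"
  proof -
    have "(code a - of_int j / base ^ i) * base ^ i = code a * base ^ i - of_int j"
      using base_ge_3 by (simp add: field_simps)
    then show ?thesis by (simp add: code_times_base_power)
  qed
  also have "\<dots> = \<bar>code a - of_int j / base ^ i\<bar> * base ^ i"
    using pos by (simp add: abs_mult)
  finally show ?thesis
    using pos by (simp add: pos_divide_le_eq flip: divide_divide_eq_left)
qed

lemma code_prefix_cong:
  "(\<And>k. k < m \<Longrightarrow> a (from_nat k) = b (from_nat k)) \<Longrightarrow> code_prefix a m = code_prefix b m"
  by (induction m) auto

lemma code_diff_le:
  assumes "\<And>k. k < m \<Longrightarrow> a (from_nat k) = b (from_nat k)"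
  shows "\<bar>code a - code b\<bar> \<le> 1 / base ^ m"
proof -
  have pos: "base ^ m > 0" using base_ge_3 by simp
  have "(code a - code b) * base ^ m = code_tail a m - code_tail b m"
    using code_times_base_power[of a m] code_times_base_power[of b m] code_prefix_cong[of m a b] assms
    by (simp add: left_diff_distrib)
  then have "\<bar>code a - code b\<bar> * base ^ m = \<bar>code_tail a m - code_tail b m\<bar>"
    by (metis abs_mult abs_of_pos pos)
  also have "\<dots> \<le> 1"
    using code_tail_strict_bounds[of a m] code_tail_strict_bounds[of b m] by linarith
  finally show ?thesis using pos by (simp add: field_simps)
qed

lemma prod_uniformly_continuous_on_code: "prod_uniformly_continuous_on K code"
  unfolding prod_uniformly_continuous_on_def
proof (intro allI impI)
  fix \<epsilon> :: real assume "\<epsilon> > 0"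
  obtain m where m: "(1 / base) ^ m < \<epsilon>"
    using real_arch_pow_inv[OF \<open>\<epsilon> > 0\<close>, of "1 / base"] base_ge_3 by auto
  have "\<bar>code a - code b\<bar> \<le> \<epsilon>" if "\<forall>h\<in>from_nat ` {..<m}. a h = b h" for a b
    using code_diff_le[of m a b] that m by (simp add: power_divide)
  then show "\<exists>N. finite N \<and> (\<forall>a\<in>K. \<forall>b\<in>K. (\<forall>h\<in>N. a h = b h) \<longrightarrow> \<bar>code a - code b\<bar> \<le> \<epsilon>)"
    by blast
qed

lemma countable_grid: "countable grid"
  unfolding grid_def by auto

lemma eventually_digit_eq:
  assumes "y \<notin> grid"
  shows "\<forall>\<^sub>F z in nhds y. digit i z = digit i y"
proof -
  define c where "c = base ^ Suc i"
  have c: "c > 0" using base_ge_3 by (simp add: c_def)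
  define k where "k = \<lfloor>y * c\<rfloor>"
  have "y \<noteq> of_int k / c"
    using assms unfolding grid_def c_def by blast
  then have "y * c \<noteq> of_int k" using c by (simp add: eq_divide_eq)
  then have lo: "of_int k < y * c" unfolding k_def using of_int_floor_le by (metis order_le_less)
  have hi: "y * c < of_int k + 1" unfolding k_def by (rule real_of_int_floor_add_one_gt)
  define U where "U = {z. of_int k < z * c} \<inter> {z. z * c < of_int k + 1}"
  have "open U" unfolding U_def
    by (intro open_Int open_Collect_less continuous_intros)
  moreover have "y \<in> U" using lo hi by (simp add: U_def)
  moreover have "digit i z = digit i y" if "z \<in> U" for z
  proof -
    have "\<lfloor>z * c\<rfloor> = k" using that unfolding U_def by (intro floor_unique) auto
    then show ?thesis by (simp add: digit_def c_def k_def)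
  qed
  ultimately show ?thesis unfolding eventually_nhds by blast
qed

lemma digit_measurable[measurable]: "digit i \<in> measurable borel (count_space UNIV)"
  unfolding digit_def by measurable

lemma borel_if_finitely_many_digits:
  assumes "finite D" and Q: "\<And>y z. \<forall>i\<in>D. digit i y = digit i z \<Longrightarrow> Q y = Q z"
  shows "{y. Q y} \<in> sets borel"
proof -
  define V where "V = {v \<in> (\<Pi>\<^sub>E i\<in>D. UNIV). \<exists>y. (\<forall>i\<in>D. digit i y = v i) \<and> Q y}"
  have "countable V"
    by (rule countable_subset[OF _ countable_PiE[OF \<open>finite D\<close>]]) (auto simp: V_def)
  have "{y. Q y} = (\<Union>v\<in>V. {y. \<forall>i\<in>D. digit i y = v i})"
  proof (intro equalityI subsetI)
    fix y assume "y \<in> {y. Q y}"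
    then have "restrict (\<lambda>i. digit i y) D \<in> V" by (auto simp: V_def)
    then show "y \<in> (\<Union>v\<in>V. {y. \<forall>i\<in>D. digit i y = v i})" by fastforce
  next
    fix y assume "y \<in> (\<Union>v\<in>V. {y. \<forall>i\<in>D. digit i y = v i})"
    then obtain v y' where "\<forall>i\<in>D. digit i y = v i" "\<forall>i\<in>D. digit i y' = v i" "Q y'"
      unfolding V_def by blast
    then show "y \<in> {y. Q y}" using Q[of y y'] by simp
  qed
  moreover have "{y. \<forall>i\<in>D. digit i y = v i} \<in> sets borel" for v
  proof -
    have "{y \<in> space borel. \<forall>i\<in>D. digit i y = v i} \<in> sets borel"
      using \<open>finite D\<close> by measurable
    then show ?thesis by simp
  qed
  ultimately show ?thesis using \<open>countable V\<close> by (auto intro!: sets.countable_UN')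
qed

end

context finite_alphabet
begin

lemma real_distribution_distr_code:
  assumes "prob_space P" "code \<in> borel_measurable P"
  shows "real_distribution (distr P borel code)"
proof -
  interpret prob_space P by (rule assms(1))
  show ?thesis using assms(2) by (intro real_distribution_distr) simp
qed

lemma tight_code_distributions:
  fixes P :: "nat \<Rightarrow> ('i::countable \<Rightarrow> 'a) measure"
  assumes "\<And>n. prob_space (P n)" "\<And>n. code \<in> borel_measurable (P n)"
  shows "tight (\<lambda>n. distr (P n) borel code)"
  unfolding tight_def
proof (intro conjI allI impI)
  show "real_distribution (distr (P n) borel code)" for n
    using assms by (rule real_distribution_distr_code)
  fix \<epsilon> :: real assume "\<epsilon> > 0"
  have "measure (distr (P n) borel code) {-1<..1} = 1" for n
  proof -
    interpret prob_space "P n" by (rule assms(1))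
    have "code a \<in> {-1<..1}" for a :: "'i \<Rightarrow> 'a"
      using code_bounds[of a] by simp
    then have "code -` {-1<..1} \<inter> space (P n) = space (P n)"
      by blast
    then show ?thesis
      using measure_distr[OF assms(2), of "{-1<..1}"] prob_space by simp
  qed
  then show "\<exists>a b. a < b \<and> (\<forall>n. 1 - \<epsilon> < measure (distr (P n) borel code) {a<..b})"
    using \<open>\<epsilon> > 0\<close> by (intro exI[of _ "-1"] exI[of _ 1]) auto
qed

lemma weak_limit_code_distributions_grid_point:
  fixes P :: "nat \<Rightarrow> ('i::countable \<Rightarrow> 'a) measure"
  assumes P: "\<And>n. prob_space (P n)" "\<And>n. code \<in> borel_measurable (P n)"
    and M: "real_distribution M" and conv: "weak_conv_m (\<lambda>n. distr (P n) borel code) M"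
    and "b \<in> grid"
  shows "measure M {b} = 0"
proof -
  interpret M: real_distribution M by (rule M)
  obtain i j where b: "b = of_int j / base ^ i" using \<open>b \<in> grid\<close> unfolding grid_def by blast
  define \<delta> where "\<delta> = 1 / ((base - 1) * base ^ i)"
  have "\<delta> > 0" using base_ge_3 by (simp add: \<delta>_def)
  define g where "g y = max 0 (1 - \<bar>y - b\<bar> / \<delta>)" for y
  have g_cont: "isCont g y" for y unfolding g_def using \<open>\<delta> > 0\<close> by (intro continuous_intros) simp
  have g_le: "norm (g y) \<le> 1" for y using \<open>\<delta> > 0\<close> by (simp add: g_def)
  have g_meas: "g \<in> borel_measurable borel"
    using g_cont by (intro borel_measurable_continuous_onI continuous_at_imp_continuous_on) auto
  have "g (code a) = 0" for a :: "'i \<Rightarrow> 'a"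
    using code_grid_distance[of i a j] \<open>\<delta> > 0\<close> unfolding g_def b \<delta>_def[symmetric] by simp
  then have "(\<integral>y. g y \<partial>distr (P n) borel code) = 0" for n
    by (simp add: integral_distr[OF P(2) g_meas])
  moreover have "(\<lambda>n. \<integral>y. g y \<partial>distr (P n) borel code) \<longlonglongrightarrow> (\<integral>y. g y \<partial>M)"
    using real_distribution_distr_code[OF P] M conv g_cont g_le
    by (rule weak_conv_imp_integral_bdd_continuous_conv)
  ultimately have g_int: "(\<integral>y. g y \<partial>M) = 0"
    using LIMSEQ_unique[OF _ tendsto_const] by fastforce
  have "measure M {b} = (\<integral>y. indicator {b} y \<partial>M)" by simp
  also have "\<dots> \<le> (\<integral>y. g y \<partial>M)"
  proof (rule integral_mono)
    show "integrable M (indicator {b} :: real \<Rightarrow> real)"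
      by (intro M.integrable_const_bound[where B=1]) (auto simp: indicator_def)
    show "integrable M g" using g_le g_meas by (intro M.integrable_const_bound[where B=1]) auto
    show "indicator {b} y \<le> g y" for y unfolding g_def indicator_def by simp
  qed
  finally show ?thesis using g_int measure_nonneg[of M "{b}"] by simp
qed

lemma weak_limit_code_distributions_grid_null:
  fixes P :: "nat \<Rightarrow> ('i::countable \<Rightarrow> 'a) measure"
  assumes P: "\<And>n. prob_space (P n)" "\<And>n. code \<in> borel_measurable (P n)"
    and M: "real_distribution M" and conv: "weak_conv_m (\<lambda>n. distr (P n) borel code) M"
  shows "emeasure M grid = 0"
proof -
  interpret M: real_distribution M by (rule M)
  have "emeasure M {b} = 0" if "b \<in> grid" for b
    using weak_limit_code_distributions_grid_point[OF P M conv that] by (simp add: M.emeasure_eq_measure)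
  then have "(\<integral>\<^sup>+b. emeasure M {b} \<partial>count_space grid) = (\<integral>\<^sup>+b. 0 \<partial>count_space grid)"
    by (intro nn_integral_cong) simp
  then show ?thesis
    using emeasure_countable_singleton[OF _ countable_grid, of M] by simp
qed

end

locale lottery_setting =
  fixes \<pi> :: "'s::finite \<Rightarrow> 's \<Rightarrow> real" and \<beta> :: real and A :: "'a::metric_space set"
    and X :: "'x set" and \<zeta> :: "'x \<Rightarrow> 'a \<Rightarrow> 's \<Rightarrow> 'x" and p :: "'x \<Rightarrow> 'a \<Rightarrow> 's \<Rightarrow> real"
    and x0 :: 'x
  assumes pi_pos: "\<And>s s'. \<pi> s s' > 0"
    and pi_sum: "\<And>s. (\<Sum>s'\<in>UNIV. \<pi> s s') = 1"
    and finite_actions: "finite A"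
    and zeta_X: "\<And>x b s. x \<in> X \<Longrightarrow> b \<in> A \<Longrightarrow> \<zeta> x b s \<in> X"
    and beta_pos: "0 < \<beta>" and beta_less_1: "\<beta> < 1"
    and x0_X: "x0 \<in> X"
    and Atil_nonempty: "\<And>x s. x \<in> X \<Longrightarrow> Atil A p x s \<noteq> {}"
begin

abbreviation plans :: "('s list \<Rightarrow> 'a) set" where
  "plans \<equiv> Atil_inf A \<zeta> p x0"

abbreviation plan_topology :: "('s list \<Rightarrow> 'a) topology" where
  "plan_topology \<equiv> subtopology (product_topology (\<lambda>_. top_of_set A) hists) plans"

sublocale finite_alphabet A
  using finite_actions Atil_nonempty[OF x0_X] by unfold_locales (auto simp: Atil_def)

lemma plans_subset_PiE: "plans \<subseteq> (\<Pi>\<^sub>E h\<in>hists. A)"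
  unfolding Atil_inf_def by auto

lemma plan_in_actions: "a \<in> plans \<Longrightarrow> h \<in> hists \<Longrightarrow> a h \<in> A"
  using plans_subset_PiE by blast

lemma hists_append: "hs \<in> hists \<Longrightarrow> hs @ ys \<in> hists"
  by (simp add: hists_def)

lemma pi_nonneg: "\<pi> s s' \<ge> 0"
  using pi_pos[of s s'] by simp

lemma xpath_in_X: "(\<And>h. h \<in> hists \<Longrightarrow> a h \<in> A) \<Longrightarrow> xpath \<zeta> x0 a h \<in> X"
  unfolding xpath_def by (rule xrev_in[OF x0_X zeta_X]) (auto simp: hists_def)

lemma topspace_plan_topology: "topspace plan_topology = plans"
  by (rule topspace_product_subtopology[OF plans_subset_PiE])

lemma space_borel_of_plan_topology: "space (borel_of plan_topology) = plans"
  unfolding space_borel_of by (rule topspace_plan_topology)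

lemma plan_lotteriesD:
  assumes "P \<in> plan_lotteries A \<zeta> p x0"
  shows "prob_space P" "space P = plans" "sets P = sets (borel_of plan_topology)"
  using assms unfolding plan_lotteries_def by auto

lemma measurable_if_prod_uniformly_continuous_on_plans:
  assumes "prod_uniformly_continuous_on plans f"
    and "space M = plans" "sets M = sets (borel_of plan_topology)"
  shows "f \<in> borel_measurable M"
  using prod_uniformly_continuous_on_measurable[OF finite_actions plans_subset_PiE] assms by blast

lemma integrable_plan_lottery:
  assumes P: "P \<in> plan_lotteries A \<zeta> p x0" and f: "prod_uniformly_continuous_on plans f"
    and f_le: "\<And>a. a \<in> plans \<Longrightarrow> \<bar>f a\<bar> \<le> C"
  shows "integrable P f"
proof -
  interpret prob_space P using plan_lotteriesD[OF P] by simp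
  show ?thesis
    using f_le plan_lotteriesD(2)[OF P]
      measurable_if_prod_uniformly_continuous_on_plans[OF f plan_lotteriesD(2,3)[OF P]]
    by (intro integrable_const_bound[where B=C]) auto
qed

lemma payoff_bound_nonneg:
  fixes f :: "'x \<Rightarrow> 'a \<Rightarrow> 's \<Rightarrow> real"
  assumes "\<forall>x\<in>X. \<forall>b\<in>A. \<forall>s. \<bar>f x b s\<bar> \<le> C"
  shows "C \<ge> 0"
proof -
  obtain b where "b \<in> A" using A_nonempty by blast
  then have "\<bar>f x0 b undefined\<bar> \<le> C" using assms x0_X by blast
  then show ?thesis using abs_ge_zero[of "f x0 b undefined"] by linarith
qed

lemma value_of_abs_le:
  assumes f: "\<forall>x\<in>X. \<forall>b\<in>A. \<forall>s. \<bar>f x b s\<bar> \<le> C" and a: "\<And>h. h \<in> hists \<Longrightarrow> a h \<in> A"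
    and hs: "hs \<in> hists"
  shows "\<bar>value_of \<pi> \<beta> \<zeta> x0 f a hs\<bar> \<le> C / (1 - \<beta>)"
  unfolding value_of_def disc_exp_def
proof (rule discounted_sum_abs_le)
  show "\<bar>cond_exp \<pi> hs n (\<lambda>h. f (xpath \<zeta> x0 a h) (a h) (last h))\<bar> \<le> C" for n
    using f xpath_in_X[of a] a hists_append[OF hs]
    by (intro cond_exp_abs_le[OF pi_sum pi_nonneg]) blast
qed (use beta_pos beta_less_1 in auto)

lemma cond_exp_payoff_cong:
  assumes "\<And>ys h. length ys = n \<Longrightarrow> h \<noteq> [] \<Longrightarrow> (\<exists>u. hs @ ys = h @ u) \<Longrightarrow> a h = b h"
    and hs: "hs \<in> hists"
  shows "cond_exp \<pi> hs n (\<lambda>h. f (xpath \<zeta> x0 a h) (a h) (last h))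
       = cond_exp \<pi> hs n (\<lambda>h. f (xpath \<zeta> x0 b h) (b h) (last h))"
  unfolding cond_exp_def
proof (rule sum.cong[OF refl])
  fix ys :: "'s list" assume "ys \<in> {ys. length ys = n}"
  then have "xpath \<zeta> x0 a (hs @ ys) = xpath \<zeta> x0 b (hs @ ys)" and "a (hs @ ys) = b (hs @ ys)"
    using assms hists_append[OF hs] by (auto simp: hists_def intro!: xpath_cong)
  then show "path_prob \<pi> (last hs) ys * f (xpath \<zeta> x0 a (hs @ ys)) (a (hs @ ys)) (last (hs @ ys))
      = path_prob \<pi> (last hs) ys * f (xpath \<zeta> x0 b (hs @ ys)) (b (hs @ ys)) (last (hs @ ys))"
    by simp
qed

lemma value_of_cong:
  assumes "\<And>h. h \<noteq> [] \<Longrightarrow> (\<exists>ys u. hs @ ys = h @ u) \<Longrightarrow> a h = b h" and "hs \<in> hists"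
  shows "value_of \<pi> \<beta> \<zeta> x0 f a hs = value_of \<pi> \<beta> \<zeta> x0 f b hs"
proof -
  have "cond_exp \<pi> hs n (\<lambda>h. f (xpath \<zeta> x0 a h) (a h) (last h))
      = cond_exp \<pi> hs n (\<lambda>h. f (xpath \<zeta> x0 b h) (b h) (last h))" for n
    by (rule cond_exp_payoff_cong[OF _ assms(2)]) (use assms(1) in blast)
  then show ?thesis by (simp add: value_of_def disc_exp_def)
qed

lemma value_of_diff_le:
  assumes f: "\<forall>x\<in>X. \<forall>b\<in>A. \<forall>s. \<bar>f x b s\<bar> \<le> C" and hs: "hs \<in> hists"
    and a: "a \<in> plans" and b: "b \<in> plans"
    and agree: "\<And>h. length h \<le> length hs + M \<Longrightarrow> a h = b h"
  shows "\<bar>value_of \<pi> \<beta> \<zeta> x0 f a hs - value_of \<pi> \<beta> \<zeta> x0 f b hs\<bar> \<le> 2 * C * \<beta> ^ M / (1 - \<beta>)"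
  unfolding value_of_def disc_exp_def
proof (rule discounted_sum_diff_le)
  have bound: "\<bar>cond_exp \<pi> hs n (\<lambda>h. f (xpath \<zeta> x0 c h) (c h) (last h))\<bar> \<le> C"
    if "c \<in> plans" for c n
    using f xpath_in_X[of c] plan_in_actions[OF that] hists_append[OF hs]
    by (intro cond_exp_abs_le[OF pi_sum pi_nonneg]) blast
  show "\<bar>cond_exp \<pi> hs n (\<lambda>h. f (xpath \<zeta> x0 a h) (a h) (last h))\<bar> \<le> C" for n
    by (rule bound[OF a])
  show "\<bar>cond_exp \<pi> hs n (\<lambda>h. f (xpath \<zeta> x0 b h) (b h) (last h))\<bar> \<le> C" for n
    by (rule bound[OF b])
  show "cond_exp \<pi> hs n (\<lambda>h. f (xpath \<zeta> x0 a h) (a h) (last h))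
      = cond_exp \<pi> hs n (\<lambda>h. f (xpath \<zeta> x0 b h) (b h) (last h))" if "n < M" for n
  proof (rule cond_exp_payoff_cong[OF _ hs])
    fix ys h assume "length ys = n" "\<exists>u. hs @ ys = h @ u"
    then obtain u where "hs @ ys = h @ u" by blast
    then have "length hs + length ys = length h + length u" by (metis length_append)
    then have "length h \<le> length hs + M" using \<open>length ys = n\<close> \<open>n < M\<close> by linarith
    then show "a h = b h" by (rule agree)
  qed
qed (use beta_pos beta_less_1 in auto)

lemma prod_uniformly_continuous_on_value_of:
  assumes f: "\<forall>x\<in>X. \<forall>b\<in>A. \<forall>s. \<bar>f x b s\<bar> \<le> C" and hs: "hs \<in> hists"
  shows "prod_uniformly_continuous_on plans (\<lambda>a. value_of \<pi> \<beta> \<zeta> x0 f a hs)"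
  unfolding prod_uniformly_continuous_on_def
proof (intro allI impI)
  fix \<epsilon> :: real assume "\<epsilon> > 0"
  have "C \<ge> 0" by (rule payoff_bound_nonneg[OF f])
  obtain M where M: "\<beta> ^ M < \<epsilon> * (1 - \<beta>) / (2 * C + 1)"
    using real_arch_pow_inv[of "\<epsilon> * (1 - \<beta>) / (2 * C + 1)" \<beta>] \<open>\<epsilon> > 0\<close> \<open>C \<ge> 0\<close> beta_less_1 by auto
  then have "(2 * C + 1) * \<beta> ^ M \<le> \<epsilon> * (1 - \<beta>)"
    using \<open>C \<ge> 0\<close> by (simp add: field_simps)
  moreover have "2 * C * \<beta> ^ M \<le> (2 * C + 1) * \<beta> ^ M"
    using beta_pos by simp
  ultimately have eps: "2 * C * \<beta> ^ M / (1 - \<beta>) \<le> \<epsilon>"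
    using beta_less_1 by (simp add: pos_divide_le_eq)
  define N where "N = {h::'s list. set h \<subseteq> UNIV \<and> length h \<le> length hs + M}"
  have "finite N" unfolding N_def by (rule finite_lists_length_le) simp
  moreover have "\<bar>value_of \<pi> \<beta> \<zeta> x0 f a hs - value_of \<pi> \<beta> \<zeta> x0 f b hs\<bar> \<le> \<epsilon>"
    if "a \<in> plans" "b \<in> plans" "\<forall>h\<in>N. a h = b h" for a b
    using value_of_diff_le[OF f hs that(1,2), of M] that(3) eps by (auto simp: N_def)
  ultimately show "\<exists>N. finite N \<and> (\<forall>a\<in>plans. \<forall>b\<in>plans. (\<forall>h\<in>N. a h = b h) \<longrightarrow>
      \<bar>value_of \<pi> \<beta> \<zeta> x0 f a hs - value_of \<pi> \<beta> \<zeta> x0 f b hs\<bar> \<le> \<epsilon>)" by blast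
qed

end

section \<open>Repairing and decoding plans\<close>

context lottery_setting
begin

definition admissible_choice :: "'x \<Rightarrow> 's \<Rightarrow> 'a \<Rightarrow> 'a" where
  "admissible_choice x s b = (if b \<in> Atil A p x s then b else (SOME c. c \<in> Atil A p x s))"

lemma admissible_choice_in_Atil: "x \<in> X \<Longrightarrow> admissible_choice x s b \<in> Atil A p x s"
  unfolding admissible_choice_def using Atil_nonempty[of x s] by (auto intro: someI_ex)

lemma admissible_choice_id: "b \<in> Atil A p x s \<Longrightarrow> admissible_choice x s b = b"
  unfolding admissible_choice_def by simp

lemma Atil_subset: "Atil A p x s \<subseteq> A"
  unfolding Atil_def by auto

text \<open>\<open>repair a\<close> replaces each inadmissible action of \<open>a\<close> by an admissible one, along the state
  path that \<open>repair a\<close> itself generates; like \<open>xrev\<close>, \<open>repaired_state\<close> reads histories reversed.\<close>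

fun repaired_state :: "('s list \<Rightarrow> 'a) \<Rightarrow> 's list \<Rightarrow> 'x" where
  "repaired_state a [] = x0"
| "repaired_state a [s] = x0"
| "repaired_state a (s # s' # rs) =
     \<zeta> (repaired_state a (s' # rs)) (admissible_choice (repaired_state a (s' # rs)) s' (a (rev (s' # rs)))) s'"

definition repair :: "('s list \<Rightarrow> 'a) \<Rightarrow> 's list \<Rightarrow> 'a" where
  "repair a h = (if h \<in> hists then admissible_choice (repaired_state a (rev h)) (last h) (a h) else undefined)"

lemma repaired_state_in_X: "repaired_state a rl \<in> X"
proof (induction a rl rule: repaired_state.induct)
  case (3 a s s' rs)
  then have x: "repaired_state a (s' # rs) \<in> X" by simp
  then have "admissible_choice (repaired_state a (s' # rs)) s' (a (rev (s' # rs))) \<in> A"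
    using admissible_choice_in_Atil Atil_subset by blast
  then show ?case using zeta_X[OF x] by simp
qed (simp_all add: x0_X)

lemma xrev_repair: "xrev \<zeta> x0 (repair a) rl = repaired_state a rl"
proof (induction a rl rule: repaired_state.induct)
  case (3 a s s' rs)
  have "rev (s' # rs) \<in> hists" by (simp add: hists_def)
  then show ?case using 3 by (simp add: repair_def last_rev)
qed simp_all

lemma repair_in_plans: "repair a \<in> plans"
  unfolding Atil_inf_def
proof (intro CollectI conjI ballI PiE_I)
  fix h :: "'s list" assume "h \<in> hists"
  then have admissible: "repair a h \<in> Atil A p (repaired_state a (rev h)) (last h)"
    using admissible_choice_in_Atil[OF repaired_state_in_X] by (simp add: repair_def)
  then show "repair a h \<in> A" using Atil_subset by blast
  show "repair a h \<in> Atil A p (xpath \<zeta> x0 (repair a) h) (last h)"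
    using admissible by (simp add: xpath_def xrev_repair)
qed (simp add: repair_def)

lemma repaired_state_eq_xrev: "a \<in> plans \<Longrightarrow> repaired_state a rl = xrev \<zeta> x0 a rl"
proof (induction a rl rule: repaired_state.induct)
  case (3 a s s' rs)
  have "rev (s' # rs) \<in> hists" by (simp add: hists_def)
  then have "a (rev (s' # rs)) \<in> Atil A p (xrev \<zeta> x0 a (s' # rs)) s'"
    using \<open>a \<in> plans\<close> unfolding Atil_inf_def by (auto simp: xpath_def last_rev)
  then show ?case using 3 by (simp add: admissible_choice_id)
qed simp_all

lemma repair_id: "a \<in> plans \<Longrightarrow> repair a = a"
proof
  fix h assume a: "a \<in> plans"
  show "repair a h = a h"
  proof (cases "h \<in> hists")
    case True
    then have "a h \<in> Atil A p (xpath \<zeta> x0 a h) (last h)" using a unfolding Atil_inf_def by blast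
    then show ?thesis using True a by (simp add: repair_def repaired_state_eq_xrev xpath_def admissible_choice_id)
  next
    case False
    then show ?thesis by (simp add: repair_def PiE_arb[OF subsetD[OF plans_subset_PiE a]])
  qed
qed

lemma repaired_state_cong:
  "(\<And>t u. rl = u @ t \<Longrightarrow> t \<noteq> [] \<Longrightarrow> a (rev t) = b (rev t)) \<Longrightarrow> repaired_state a rl = repaired_state b rl"
proof (induction a rl rule: repaired_state.induct)
  case (3 a s s' rs)
  have "repaired_state a (s' # rs) = repaired_state b (s' # rs)"
    by (rule "3.IH") (metis "3.prems" append_Cons)
  moreover have "a (rev (s' # rs)) = b (rev (s' # rs))"
    using "3.prems"[of "[s]" "s' # rs"] by simp
  ultimately show ?case by simp
qed simp_all

lemma repair_cong:
  assumes "\<And>h'. h' \<noteq> [] \<Longrightarrow> (\<exists>u. h = h' @ u) \<Longrightarrow> a h' = b h'"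
  shows "repair a h = repair b h"
proof (cases "h \<in> hists")
  case True
  have "repaired_state a (rev h) = repaired_state b (rev h)"
  proof (rule repaired_state_cong)
    fix t u assume "rev h = u @ t" "t \<noteq> []"
    then have "h = rev t @ rev u" by (metis rev_append rev_rev_ident)
    then show "a (rev t) = b (rev t)" using assms \<open>t \<noteq> []\<close> by auto
  qed
  moreover have "a h = b h" using assms True by (auto simp: hists_def)
  ultimately show ?thesis by (simp add: repair_def)
qed (simp add: repair_def)

definition decode :: "real \<Rightarrow> 's list \<Rightarrow> 'a" where
  "decode y = repair (decode_raw y)"

lemma decode_in_plans: "decode y \<in> plans"
  unfolding decode_def by (rule repair_in_plans)

lemma decode_code: "a \<in> plans \<Longrightarrow> decode (code a) = a"
proof -
  assume a: "a \<in> plans"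
  have "repair (decode_raw (code a)) h = repair a h" for h
    by (intro repair_cong decode_raw_code plan_in_actions[OF a]) (simp add: hists_def)
  then show ?thesis using repair_id[OF a] by (auto simp: decode_def)
qed

definition prefix_closure :: "'s list set \<Rightarrow> 's list set" where
  "prefix_closure N = {h'. h' \<noteq> [] \<and> (\<exists>h\<in>N. \<exists>u. h = h' @ u)}"

lemma finite_prefix_closure: "finite N \<Longrightarrow> finite (prefix_closure N)"
proof -
  assume "finite N"
  have "prefix_closure N \<subseteq> (\<Union>h\<in>N. (\<lambda>k. take k h) ` {..length h})"
  proof
    fix h' assume "h' \<in> prefix_closure N"
    then obtain h u where "h \<in> N" "h = h' @ u" unfolding prefix_closure_def by blast
    then have "h' = take (length h') h" "length h' \<le> length h" by auto
    then show "h' \<in> (\<Union>h\<in>N. (\<lambda>k. take k h) ` {..length h})" using \<open>h \<in> N\<close> by blast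
  qed
  moreover have "finite (\<Union>h\<in>N. (\<lambda>k. take k h) ` {..length h})" using \<open>finite N\<close> by auto
  ultimately show ?thesis by (rule finite_subset)
qed

lemma decode_eq_if_digits_eq:
  assumes "\<forall>i\<in>to_nat ` prefix_closure N. digit i y = digit i z"
  shows "\<forall>h\<in>N. decode y h = decode z h"
proof
  fix h assume "h \<in> N"
  show "decode y h = decode z h" unfolding decode_def
  proof (rule repair_cong)
    fix h' :: "'s list" assume "h' \<noteq> []" "\<exists>u. h = h' @ u"
    then have "h' \<in> prefix_closure N" using \<open>h \<in> N\<close> by (auto simp: prefix_closure_def)
    then show "decode_raw y h' = decode_raw z h'" using assms by (simp add: decode_raw_def)
  qed
qed

end

section \<open>Sequential compactness of plan lotteries\<close>

context lottery_setting
begin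

lemma decode_measurable: "decode \<in> measurable borel (borel_of plan_topology)"
  unfolding borel_of_def topspace_plan_topology
proof (rule measurable_measure_of)
  show "{U. openin plan_topology U} \<subseteq> Pow plans"
    using openin_subset[of plan_topology] topspace_plan_topology by auto
  show "decode \<in> space borel \<rightarrow> plans" using decode_in_plans by auto
  fix U assume "U \<in> {U. openin plan_topology U}"
  then have U: "openin plan_topology U" by simp
  define Fam where "Fam = {(N, c). finite N \<and> N \<subseteq> hists \<and> c \<in> (\<Pi>\<^sub>E h\<in>N. A) \<and>
      (\<forall>b\<in>plans. (\<forall>h\<in>N. b h = c h) \<longrightarrow> b \<in> U)}"
  have "countable Fam"
  proof (rule countable_subset)
    show "Fam \<subseteq> (SIGMA N:{N. finite N}. \<Pi>\<^sub>E h\<in>N. A)" unfolding Fam_def by auto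
    show "countable (SIGMA N:{N::'s list set. finite N}. \<Pi>\<^sub>E h\<in>N. A)"
      using finite_actions by (intro countable_SIGMA countable_Collect_finite countable_PiE)
        (auto intro: countable_finite)
  qed
  have "decode -` U \<inter> space borel = (\<Union>(N, c)\<in>Fam. {y. \<forall>h\<in>N. decode y h = c h})"
  proof (intro equalityI subsetI)
    fix y assume "y \<in> decode -` U \<inter> space borel"
    then obtain N where N: "finite N" "N \<subseteq> hists" "\<And>b. b \<in> plans \<Longrightarrow> \<forall>h\<in>N. b h = decode y h \<Longrightarrow> b \<in> U"
      using openin_product_subtopology_contains_cylinder[OF U _ plans_subset_PiE] by blast
    then have "(N, restrict (decode y) N) \<in> Fam"
      using plan_in_actions[OF decode_in_plans] by (auto simp: Fam_def)
    then show "y \<in> (\<Union>(N, c)\<in>Fam. {y. \<forall>h\<in>N. decode y h = c h})"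
      by (intro UN_I[of "(N, restrict (decode y) N)"]) auto
  qed (use decode_in_plans in \<open>auto simp: Fam_def\<close>)
  moreover have "{y. \<forall>h\<in>N. decode y h = c h} \<in> sets borel" if "(N, c) \<in> Fam" for N c
  proof (rule borel_if_finitely_many_digits)
    show "finite (to_nat ` prefix_closure N)"
      using that finite_prefix_closure by (simp add: Fam_def)
    show "(\<forall>h\<in>N. decode y h = c h) = (\<forall>h\<in>N. decode z h = c h)"
      if "\<forall>i\<in>to_nat ` prefix_closure N. digit i y = digit i z" for y z
      using decode_eq_if_digits_eq[OF that] by simp
  qed
  ultimately show "decode -` U \<inter> space borel \<in> sets borel"
    using \<open>countable Fam\<close> by (auto intro!: sets.countable_UN')
qed

lemma isCont_comp_decode:
  assumes f: "prod_uniformly_continuous_on plans f" and "y \<notin> grid"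
  shows "isCont (\<lambda>y. f (decode y)) y"
  unfolding isCont_def tendsto_iff
proof (intro allI impI)
  fix e :: real assume "e > 0"
  then obtain N where N: "finite N" "\<forall>a\<in>plans. \<forall>b\<in>plans. (\<forall>h\<in>N. a h = b h) \<longrightarrow> \<bar>f a - f b\<bar> \<le> e / 2"
    using f unfolding prod_uniformly_continuous_on_def by (meson half_gt_zero)
  have "\<forall>\<^sub>F z in nhds y. \<forall>i\<in>to_nat ` prefix_closure N. digit i z = digit i y"
    using finite_prefix_closure[OF N(1)] eventually_digit_eq[OF \<open>y \<notin> grid\<close>]
    by (intro eventually_ball_finite) auto
  then have "\<forall>\<^sub>F z in nhds y. dist (f (decode z)) (f (decode y)) < e"
  proof (rule eventually_mono)
    fix z assume "\<forall>i\<in>to_nat ` prefix_closure N. digit i z = digit i y"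
    then have "\<bar>f (decode z) - f (decode y)\<bar> \<le> e / 2"
      using N(2) decode_in_plans decode_eq_if_digits_eq by blast
    then show "dist (f (decode z)) (f (decode y)) < e" using \<open>e > 0\<close> by (simp add: dist_real_def)
  qed
  then show "\<forall>\<^sub>F z in at y. dist (f (decode z)) (f (decode y)) < e"
    unfolding eventually_at_filter by (rule eventually_mono) simp
qed

lemma borel_measurable_comp_decode:
  "prod_uniformly_continuous_on plans f \<Longrightarrow> (\<lambda>y. f (decode y)) \<in> borel_measurable borel"
  by (rule borel_measurable_continuous_countable_exceptions[OF countable_grid])
     (auto intro!: continuous_at_imp_continuous_on isCont_comp_decode)

lemma code_measurable: "P \<in> plan_lotteries A \<zeta> p x0 \<Longrightarrow> code \<in> borel_measurable P"
  using measurable_if_prod_uniformly_continuous_on_plans[OF prod_uniformly_continuous_on_code]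
    plan_lotteriesD by blast

lemma distr_decode_in_plan_lotteries:
  assumes "real_distribution M"
  shows "distr M (borel_of plan_topology) decode \<in> plan_lotteries A \<zeta> p x0"
proof -
  interpret M: real_distribution M by (rule assms)
  have "decode \<in> measurable M (borel_of plan_topology)"
    unfolding measurable_cong_sets[OF M.events_eq_borel refl] by (rule decode_measurable)
  then show ?thesis
    unfolding plan_lotteries_def using M.prob_space_distr space_borel_of_plan_topology by simp
qed

text \<open>Decoding a weak limit of the coded lotteries is a limit for all continuous payoffs: the
  limit puts no mass on the grid, off which \<open>decode\<close> is continuous.\<close>

lemma integral_weak_limit_decode:
  assumes P: "\<And>n. P n \<in> plan_lotteries A \<zeta> p x0"
    and M: "real_distribution M" and conv: "weak_conv_m (\<lambda>n. distr (P n) borel code) M"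
    and f: "prod_uniformly_continuous_on plans f" and f_le: "\<And>a. a \<in> plans \<Longrightarrow> \<bar>f a\<bar> \<le> C"
  shows "(\<lambda>n. \<integral>a. f a \<partial>P n) \<longlonglongrightarrow> (\<integral>a. f a \<partial>distr M (borel_of plan_topology) decode)"
proof -
  interpret M: real_distribution M by (rule M)
  have P_prob: "prob_space (P n)" and code_meas: "code \<in> borel_measurable (P n)" for n
    using plan_lotteriesD(1)[OF P] code_measurable[OF P] by auto
  have f_decode: "(\<lambda>y. f (decode y)) \<in> borel_measurable borel"
    by (rule borel_measurable_comp_decode[OF f])
  have "M {y. \<not> isCont (\<lambda>y. f (decode y)) y} = 0"
  proof (cases "{y. \<not> isCont (\<lambda>y. f (decode y)) y} \<in> sets M")
    case True
    have "{y. \<not> isCont (\<lambda>y. f (decode y)) y} \<subseteq> grid"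
      using isCont_comp_decode[OF f] by blast
    moreover have "grid \<in> sets M"
      by (rule sets.countable[OF _ countable_grid]) simp
    ultimately have "M {y. \<not> isCont (\<lambda>y. f (decode y)) y} \<le> M grid"
      using True by (intro emeasure_mono)
    then show ?thesis
      using weak_limit_code_distributions_grid_null[OF P_prob code_meas M conv] by simp
  qed (rule emeasure_notin_sets)
  then have "(\<lambda>n. \<integral>y. f (decode y) \<partial>distr (P n) borel code) \<longlonglongrightarrow> (\<integral>y. f (decode y) \<partial>M)"
    using real_distribution_distr_code[OF P_prob code_meas] M conv f_le[OF decode_in_plans] f_decode
    by (intro weak_conv_imp_bdd_ae_continuous_conv) auto
  moreover have "(\<integral>y. f (decode y) \<partial>distr (P n) borel code) = (\<integral>a. f a \<partial>P n)" for n
  proof -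
    have "(\<integral>y. f (decode y) \<partial>distr (P n) borel code) = (\<integral>a. f (decode (code a)) \<partial>P n)"
      by (rule integral_distr[OF code_meas f_decode])
    also have "\<dots> = (\<integral>a. f a \<partial>P n)"
      by (rule Bochner_Integration.integral_cong) (use plan_lotteriesD(2)[OF P] decode_code in auto)
    finally show ?thesis .
  qed
  moreover have "(\<integral>y. f (decode y) \<partial>M) = (\<integral>a. f a \<partial>distr M (borel_of plan_topology) decode)"
    using decode_measurable
      measurable_if_prod_uniformly_continuous_on_plans[OF f space_borel_of_plan_topology refl]
    by (subst integral_distr) (auto simp: measurable_cong_sets[OF M.events_eq_borel refl])
  ultimately show ?thesis by simp
qed

lemma plan_lotteries_sequentially_compact:
  fixes P :: "nat \<Rightarrow> ('s list \<Rightarrow> 'a) measure"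
  assumes P: "\<And>n. P n \<in> plan_lotteries A \<zeta> p x0"
  obtains r Q where "strict_mono r" "Q \<in> plan_lotteries A \<zeta> p x0"
    "\<And>f C. prod_uniformly_continuous_on plans f \<Longrightarrow> (\<And>a. a \<in> plans \<Longrightarrow> \<bar>f a\<bar> \<le> C) \<Longrightarrow>
       (\<lambda>n. \<integral>a. f a \<partial>P (r n)) \<longlonglongrightarrow> (\<integral>a. f a \<partial>Q)"
proof -
  have "tight (\<lambda>n. distr (P n) borel code)"
    using plan_lotteriesD(1)[OF P] code_measurable[OF P] by (rule tight_code_distributions)
  then have "\<exists>r M. strict_mono r \<and> real_distribution M \<and>
      weak_conv_m ((\<lambda>n. distr (P n) borel code) \<circ> id \<circ> r) M"
    by (rule tight_imp_convergent_subsubsequence) (simp add: strict_mono_def)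
  then obtain r M where r: "strict_mono r" and M: "real_distribution M"
    and conv: "weak_conv_m (\<lambda>n. distr (P (r n)) borel code) M"
    by (auto simp: comp_def)
  have P_r: "P (r n) \<in> plan_lotteries A \<zeta> p x0" for n by (rule P)
  show thesis
  proof (rule that[OF r distr_decode_in_plan_lotteries[OF M]])
    fix f C assume "prod_uniformly_continuous_on plans f" "\<And>a. a \<in> plans \<Longrightarrow> \<bar>f a\<bar> \<le> C"
    then show "(\<lambda>n. \<integral>a. f a \<partial>P (r n)) \<longlonglongrightarrow> (\<integral>a. f a \<partial>distr M (borel_of plan_topology) decode)"
      by (rule integral_weak_limit_decode[OF P_r M conv])
  qed
qed

end

section \<open>Existence of an optimal lottery\<close>

lemma attains_Sup_if_subsequence_limits:
  fixes obj :: "'b \<Rightarrow> real"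
  assumes "F \<noteq> {}" and bdd: "bdd_above (obj ` F)"
    and lim: "\<And>P. (\<And>n. P n \<in> F) \<Longrightarrow>
                \<exists>r Q. strict_mono (r :: nat \<Rightarrow> nat) \<and> Q \<in> F \<and> (\<lambda>n. obj (P (r n))) \<longlonglongrightarrow> obj Q"
  obtains Q where "Q \<in> F" "\<And>P. P \<in> F \<Longrightarrow> obj P \<le> obj Q"
proof -
  define S where "S = Sup (obj ` F)"
  have upper: "obj P \<le> S" if "P \<in> F" for P
    unfolding S_def using bdd that by (intro cSup_upper) auto
  have "\<exists>P. P \<in> F \<and> S - 1 / real (Suc n) < obj P" for n
  proof -
    have "S - 1 / real (Suc n) < Sup (obj ` F)" unfolding S_def by simp
    then show ?thesis using \<open>F \<noteq> {}\<close> by (auto elim: less_cSupE)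
  qed
  then obtain P where P: "\<And>n. P n \<in> F" "\<And>n. S - 1 / real (Suc n) < obj (P n)" by metis
  have lim_S: "(\<lambda>n. obj (P n)) \<longlonglongrightarrow> S"
  proof (rule tendsto_sandwich[where f="\<lambda>n. S - 1 / real (Suc n)" and h="\<lambda>n. S"])
    show "\<forall>\<^sub>F n in sequentially. S - 1 / real (Suc n) \<le> obj (P n)"
      using P(2) less_imp_le by (intro always_eventually) blast
    show "\<forall>\<^sub>F n in sequentially. obj (P n) \<le> S"
      using upper P(1) by (intro always_eventually) blast
    show "(\<lambda>n. S - 1 / real (Suc n)) \<longlonglongrightarrow> S"
      using tendsto_diff[OF tendsto_const LIMSEQ_inverse_real_of_nat, of S]
      by (simp add: inverse_eq_divide)
  qed simp
  have "\<exists>r Q. strict_mono r \<and> Q \<in> F \<and> (\<lambda>n. obj (P (r n))) \<longlonglongrightarrow> obj Q"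
    using lim[of P] P(1) by blast
  then obtain r Q where r: "strict_mono r" and "Q \<in> F" and lim_Q: "(\<lambda>n. obj (P (r n))) \<longlonglongrightarrow> obj Q"
    by blast
  have "(\<lambda>n. obj (P (r n))) \<longlonglongrightarrow> S"
    using LIMSEQ_subseq_LIMSEQ[OF lim_S r] by (simp add: comp_def)
  then have "obj Q = S" using lim_Q LIMSEQ_unique by blast
  then show thesis using that \<open>Q \<in> F\<close> upper by simp
qed

lemma bounded_payoff_combination:
  fixes I :: nat and r :: "'x \<Rightarrow> 'a \<Rightarrow> 's \<Rightarrow> real" and g :: "nat \<Rightarrow> 'x \<Rightarrow> 'a \<Rightarrow> 's \<Rightarrow> real"
  assumes "\<exists>B. \<forall>x\<in>X. \<forall>b\<in>A. \<forall>s. \<bar>r x b s\<bar> \<le> B"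
    and "\<And>i. i < I \<Longrightarrow> \<exists>B. \<forall>x\<in>X. \<forall>b\<in>A. \<forall>s. \<bar>g i x b s\<bar> \<le> B"
  shows "\<exists>B. \<forall>x\<in>X. \<forall>b\<in>A. \<forall>s. \<bar>r x b s + (\<Sum>i<I. \<gamma> i * g i x b s)\<bar> \<le> B"
  using assms(2)
proof (induction I)
  case 0
  then show ?case using assms(1) by simp
next
  case (Suc I)
  obtain B where B: "\<forall>x\<in>X. \<forall>b\<in>A. \<forall>s. \<bar>r x b s + (\<Sum>i<I. \<gamma> i * g i x b s)\<bar> \<le> B"
    using Suc by (meson less_SucI)
  obtain B' where B': "\<forall>x\<in>X. \<forall>b\<in>A. \<forall>s. \<bar>g I x b s\<bar> \<le> B'"
    using Suc.prems by blast
  have "\<bar>r x b s + (\<Sum>i<Suc I. \<gamma> i * g i x b s)\<bar> \<le> B + \<bar>\<gamma> I\<bar> * B'" if "x \<in> X" "b \<in> A" for x b s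
  proof -
    have "\<bar>\<gamma> I * g I x b s\<bar> \<le> \<bar>\<gamma> I\<bar> * B'"
      using B' that by (simp add: abs_mult mult_left_mono)
    moreover have "\<bar>r x b s + (\<Sum>i<I. \<gamma> i * g i x b s)\<bar> \<le> B"
      using B that by blast
    moreover have "r x b s + (\<Sum>i<Suc I. \<gamma> i * g i x b s)
        = (r x b s + (\<Sum>i<I. \<gamma> i * g i x b s)) + \<gamma> I * g I x b s"
      by simp
    ultimately show ?thesis
      using abs_triangle_ineq[of "r x b s + (\<Sum>i<I. \<gamma> i * g i x b s)" "\<gamma> I * g I x b s"] by linarith
  qed
  then show ?case by blast
qed

context lottery_setting
begin

definition constraint_integrand ::
    "(nat \<Rightarrow> 'x \<Rightarrow> 'a \<Rightarrow> 's \<Rightarrow> real) \<Rightarrow> (nat \<Rightarrow> real) \<Rightarrow> 's list \<Rightarrow> 'a list \<Rightarrow> nat \<Rightarrow> ('s list \<Rightarrow> 'a) \<Rightarrow> real"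
  where
  "constraint_integrand g gbar hs as i a =
     (if \<forall>k < length as. a (take (Suc k) hs) = as ! k then 1 else 0) * (value_of \<pi> \<beta> \<zeta> x0 (g i) a hs - gbar i)"

lemma lottery_constraints_iff:
  fixes I :: nat
  shows "lottery_constraints \<pi> \<beta> A \<zeta> I g gbar x0 P \<longleftrightarrow>
     (\<forall>hs\<in>hists. \<forall>as. length as = length hs - 1 \<longrightarrow> set as \<subseteq> A \<longrightarrow>
        (\<forall>i<I. 0 \<le> (\<integral>a. constraint_integrand g gbar hs as i a \<partial>P)))"
  unfolding lottery_constraints_def constraint_integrand_def by simp

lemma prod_uniformly_continuous_on_constraint_integrand:
  assumes "\<forall>x\<in>X. \<forall>b\<in>A. \<forall>s. \<bar>g i x b s\<bar> \<le> C" "hs \<in> hists"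
  shows "prod_uniformly_continuous_on plans (constraint_integrand g gbar hs as i)"
  unfolding constraint_integrand_def
proof (rule prod_uniformly_continuous_on_mult_local[where N\<^sub>G="(\<lambda>k. take (Suc k) hs) ` {..<length as}"])
  show "prod_uniformly_continuous_on plans (\<lambda>a. value_of \<pi> \<beta> \<zeta> x0 (g i) a hs - gbar i)"
    by (rule prod_uniformly_continuous_on_diff_const[OF prod_uniformly_continuous_on_value_of[OF assms]])
qed auto

lemma constraint_integrand_abs_le:
  assumes "\<forall>x\<in>X. \<forall>b\<in>A. \<forall>s. \<bar>g i x b s\<bar> \<le> C" "hs \<in> hists" "a \<in> plans"
  shows "\<bar>constraint_integrand g gbar hs as i a\<bar> \<le> C / (1 - \<beta>) + \<bar>gbar i\<bar>"
proof -
  have "\<bar>value_of \<pi> \<beta> \<zeta> x0 (g i) a hs\<bar> \<le> C / (1 - \<beta>)"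
    using value_of_abs_le[OF assms(1) _ assms(2)] plan_in_actions[OF assms(3)] by blast
  moreover have "0 \<le> C / (1 - \<beta>)"
    using payoff_bound_nonneg[OF assms(1)] beta_less_1 by simp
  ultimately show ?thesis unfolding constraint_integrand_def by auto
qed

lemma lottery_constraints_limit:
  fixes I :: nat and g :: "nat \<Rightarrow> 'x \<Rightarrow> 'a \<Rightarrow> 's \<Rightarrow> real"
  assumes g_bdd: "\<And>i. i < I \<Longrightarrow> \<exists>B. \<forall>x\<in>X. \<forall>b\<in>A. \<forall>s. \<bar>g i x b s\<bar> \<le> B"
    and P: "\<And>n. lottery_constraints \<pi> \<beta> A \<zeta> I g gbar x0 (P n)"
    and lim: "\<And>f C. prod_uniformly_continuous_on plans f \<Longrightarrow> (\<And>a. a \<in> plans \<Longrightarrow> \<bar>f a\<bar> \<le> C) \<Longrightarrow>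
                (\<lambda>n. \<integral>a. f a \<partial>P n) \<longlonglongrightarrow> (\<integral>a. f a \<partial>Q)"
  shows "lottery_constraints \<pi> \<beta> A \<zeta> I g gbar x0 Q"
  unfolding lottery_constraints_iff
proof (intro ballI allI impI)
  fix hs :: "'s list" and as :: "'a list" and i assume hs: "hs \<in> hists" and i: "i < I"
    and "length as = length hs - 1" "set as \<subseteq> A"
  then have "0 \<le> (\<integral>a. constraint_integrand g gbar hs as i a \<partial>P n)" for n
    using P[of n] unfolding lottery_constraints_iff by blast
  moreover obtain C where C: "\<forall>x\<in>X. \<forall>b\<in>A. \<forall>s. \<bar>g i x b s\<bar> \<le> C" using g_bdd[OF i] by blast
  moreover have "(\<lambda>n. \<integral>a. constraint_integrand g gbar hs as i a \<partial>P n)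
      \<longlonglongrightarrow> (\<integral>a. constraint_integrand g gbar hs as i a \<partial>Q)"
    by (rule lim[OF prod_uniformly_continuous_on_constraint_integrand[where g=g and i=i, OF C hs]
          constraint_integrand_abs_le[where g=g and i=i, OF C hs]])
  ultimately show "0 \<le> (\<integral>a. constraint_integrand g gbar hs as i a \<partial>Q)"
    by (intro LIMSEQ_le_const) auto
qed

lemma return_in_plan_lotteries: "a \<in> plans \<Longrightarrow> return (borel_of plan_topology) a \<in> plan_lotteries A \<zeta> p x0"
  unfolding plan_lotteries_def
  using prob_space_return[of a "borel_of plan_topology"] space_borel_of_plan_topology by simp

lemma lottery_constraints_return:
  fixes I :: nat and g :: "nat \<Rightarrow> 'x \<Rightarrow> 'a \<Rightarrow> 's \<Rightarrow> real"
  assumes g_bdd: "\<And>i. i < I \<Longrightarrow> \<exists>B. \<forall>x\<in>X. \<forall>b\<in>A. \<forall>s. \<bar>g i x b s\<bar> \<le> B"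
    and a: "a \<in> plans" and feasible: "\<And>hs i. hs \<in> hists \<Longrightarrow> i < I \<Longrightarrow> gbar i \<le> value_of \<pi> \<beta> \<zeta> x0 (g i) a hs"
  shows "lottery_constraints \<pi> \<beta> A \<zeta> I g gbar x0 (return (borel_of plan_topology) a)"
  unfolding lottery_constraints_iff
proof (intro ballI allI impI)
  fix hs :: "'s list" and as :: "'a list" and i assume hs: "hs \<in> hists" and i: "i < I"
  obtain C where "\<forall>x\<in>X. \<forall>b\<in>A. \<forall>s. \<bar>g i x b s\<bar> \<le> C" using g_bdd[OF i] by blast
  then have "constraint_integrand g gbar hs as i \<in> borel_measurable (borel_of plan_topology)"
    using hs space_borel_of_plan_topology
    by (intro measurable_if_prod_uniformly_continuous_on_plans prod_uniformly_continuous_on_constraint_integrand) auto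
  then have "(\<integral>a. constraint_integrand g gbar hs as i a \<partial>return (borel_of plan_topology) a)
      = constraint_integrand g gbar hs as i a"
    using a space_borel_of_plan_topology by (intro integral_return) auto
  also have "\<dots> \<ge> 0" unfolding constraint_integrand_def using feasible[OF hs i] by simp
  finally show "0 \<le> (\<integral>a. constraint_integrand g gbar hs as i a \<partial>return (borel_of plan_topology) a)" .
qed

text \<open>Feasible plans for the different initial shocks are pasted along the first shock.\<close>

lemma plan_feasible_at_all_histories:
  fixes I :: nat and g :: "nat \<Rightarrow> 'x \<Rightarrow> 'a \<Rightarrow> 's \<Rightarrow> real"
  assumes "\<And>s. \<exists>a. feasible_plan \<pi> \<beta> A \<zeta> p I g gbar x0 s a"
  obtains a where "a \<in> plans" "\<And>hs i. hs \<in> hists \<Longrightarrow> i < I \<Longrightarrow> gbar i \<le> value_of \<pi> \<beta> \<zeta> x0 (g i) a hs"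
proof -
  have "\<exists>a\<^sub>s. \<forall>s. feasible_plan \<pi> \<beta> A \<zeta> p I g gbar x0 s (a\<^sub>s s)"
    using assms by (intro choice allI)
  then obtain a\<^sub>s where feas: "\<And>s. feasible_plan \<pi> \<beta> A \<zeta> p I g gbar x0 s (a\<^sub>s s)"
    by blast
  then have a\<^sub>s_plans: "a\<^sub>s s \<in> plans" for s by (simp add: feasible_plan_def)
  define a where "a h = (if h \<in> hists then a\<^sub>s (hd h) h else undefined)" for h
  have agree: "a h' = a\<^sub>s (hd hs) h'" if "hs \<in> hists" "h' \<noteq> []" "hs @ ys = h' @ u" for hs h' ys u
  proof -
    have "hs \<noteq> []" using that(1) by (simp add: hists_def)
    then have "hd h' = hd hs" using that(2,3) by (metis hd_append)
    then show ?thesis using that(2) by (simp add: a_def hists_def)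
  qed
  have "a \<in> plans"
    unfolding Atil_inf_def
  proof (intro CollectI conjI ballI PiE_I)
    fix h :: "'s list" assume h: "h \<in> hists"
    then show "a h \<in> A" using plan_in_actions[OF a\<^sub>s_plans] by (simp add: a_def)
    have "xpath \<zeta> x0 a h = xpath \<zeta> x0 (a\<^sub>s (hd h)) h"
      by (rule xpath_cong) (use agree[OF h, of _ "[]"] in auto)
    moreover have "a\<^sub>s (hd h) h \<in> Atil A p (xpath \<zeta> x0 (a\<^sub>s (hd h)) h) (last h)"
      using a\<^sub>s_plans h unfolding Atil_inf_def by blast
    ultimately show "a h \<in> Atil A p (xpath \<zeta> x0 a h) (last h)"
      using h by (simp add: a_def)
  qed (simp add: a_def)
  moreover have "gbar i \<le> value_of \<pi> \<beta> \<zeta> x0 (g i) a hs" if "hs \<in> hists" "i < I" for hs i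
  proof -
    have "value_of \<pi> \<beta> \<zeta> x0 (g i) a hs = value_of \<pi> \<beta> \<zeta> x0 (g i) (a\<^sub>s (hd hs)) hs"
      using agree[OF that(1)] by (intro value_of_cong[OF _ that(1)]) blast
    then show ?thesis using feas[of "hd hs"] that unfolding feasible_plan_def by simp
  qed
  ultimately show thesis by (rule that)
qed

lemma exists_feasible_lottery:
  fixes I :: nat and g :: "nat \<Rightarrow> 'x \<Rightarrow> 'a \<Rightarrow> 's \<Rightarrow> real"
  assumes g_bdd: "\<And>i. i < I \<Longrightarrow> \<exists>B. \<forall>x\<in>X. \<forall>b\<in>A. \<forall>s. \<bar>g i x b s\<bar> \<le> B"
    and feasible: "\<And>s. \<exists>a. feasible_plan \<pi> \<beta> A \<zeta> p I g gbar x0 s a"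
  shows "\<exists>P \<in> plan_lotteries A \<zeta> p x0. lottery_constraints \<pi> \<beta> A \<zeta> I g gbar x0 P"
proof -
  obtain a where a: "a \<in> plans"
    and a_feasible: "\<And>hs i. hs \<in> hists \<Longrightarrow> i < I \<Longrightarrow> gbar i \<le> value_of \<pi> \<beta> \<zeta> x0 (g i) a hs"
    using plan_feasible_at_all_histories[OF feasible] by blast
  show ?thesis
    using return_in_plan_lotteries[OF a]
      lottery_constraints_return[where I=I and g=g and gbar=gbar, OF g_bdd a a_feasible] by blast
qed

lemma integral_plan_lottery_le:
  assumes P: "P \<in> plan_lotteries A \<zeta> p x0" and f: "prod_uniformly_continuous_on plans f"
    and f_le: "\<And>a. a \<in> plans \<Longrightarrow> \<bar>f a\<bar> \<le> C"
  shows "(\<integral>a. f a \<partial>P) \<le> C"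
proof -
  interpret prob_space P using plan_lotteriesD(1)[OF P] .
  have "AE a in P. f a \<le> C"
  proof (rule AE_I2)
    fix a assume "a \<in> space P"
    then have "a \<in> plans" using plan_lotteriesD(2)[OF P] by simp
    then show "f a \<le> C" by (rule abs_le_D1[OF f_le])
  qed
  then show ?thesis using integrable_plan_lottery[OF P f f_le] by (intro integral_le_const)
qed

lemma feasible_lotteries_convergent_subsequence:
  fixes I :: nat and g :: "nat \<Rightarrow> 'x \<Rightarrow> 'a \<Rightarrow> 's \<Rightarrow> real"
    and P :: "nat \<Rightarrow> ('s list \<Rightarrow> 'a) measure"
  assumes g_bdd: "\<And>i. i < I \<Longrightarrow> \<exists>B. \<forall>x\<in>X. \<forall>b\<in>A. \<forall>s. \<bar>g i x b s\<bar> \<le> B"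
    and P: "\<And>n. P n \<in> plan_lotteries A \<zeta> p x0" "\<And>n. lottery_constraints \<pi> \<beta> A \<zeta> I g gbar x0 (P n)"
    and f: "prod_uniformly_continuous_on plans f" and f_le: "\<And>a. a \<in> plans \<Longrightarrow> \<bar>f a\<bar> \<le> C"
  obtains r Q where "strict_mono r" "Q \<in> plan_lotteries A \<zeta> p x0"
    "lottery_constraints \<pi> \<beta> A \<zeta> I g gbar x0 Q" "(\<lambda>n. \<integral>a. f a \<partial>P (r n)) \<longlonglongrightarrow> (\<integral>a. f a \<partial>Q)"
proof (rule plan_lotteries_sequentially_compact[of P, OF P(1)])
  fix r Q assume r: "strict_mono r" and Q: "Q \<in> plan_lotteries A \<zeta> p x0"
    and lim: "\<And>f C. prod_uniformly_continuous_on plans f \<Longrightarrow> (\<And>a. a \<in> plans \<Longrightarrow> \<bar>f a\<bar> \<le> C) \<Longrightarrow>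
                (\<lambda>n. \<integral>a. f a \<partial>P (r n)) \<longlonglongrightarrow> (\<integral>a. f a \<partial>Q)"
  have "lottery_constraints \<pi> \<beta> A \<zeta> I g gbar x0 Q"
    by (rule lottery_constraints_limit[where P="\<lambda>n. P (r n)", OF g_bdd P(2) lim])
  then show thesis using that r Q lim[OF f f_le] by blast
qed

lemma lottery_problem_has_maximizer:
  fixes I :: nat and g :: "nat \<Rightarrow> 'x \<Rightarrow> 'a \<Rightarrow> 's \<Rightarrow> real"
  assumes r_bdd: "\<exists>B. \<forall>x\<in>X. \<forall>b\<in>A. \<forall>s. \<bar>r x b s\<bar> \<le> B"
    and g_bdd: "\<And>i. i < I \<Longrightarrow> \<exists>B. \<forall>x\<in>X. \<forall>b\<in>A. \<forall>s. \<bar>g i x b s\<bar> \<le> B"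
    and feasible: "\<And>s. \<exists>a. feasible_plan \<pi> \<beta> A \<zeta> p I g gbar x0 s a"
  obtains Q where "Q \<in> plan_lotteries A \<zeta> p x0" "lottery_constraints \<pi> \<beta> A \<zeta> I g gbar x0 Q"
    "\<And>P. P \<in> plan_lotteries A \<zeta> p x0 \<Longrightarrow> lottery_constraints \<pi> \<beta> A \<zeta> I g gbar x0 P \<Longrightarrow>
       lottery_objective \<pi> \<beta> \<zeta> r I g \<gamma> x0 s0 P \<le> lottery_objective \<pi> \<beta> \<zeta> r I g \<gamma> x0 s0 Q"
proof -
  define u where "u x b s = r x b s + (\<Sum>i<I. \<gamma> i * g i x b s)" for x b s
  obtain C where C: "\<forall>x\<in>X. \<forall>b\<in>A. \<forall>s. \<bar>u x b s\<bar> \<le> C"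
    using bounded_payoff_combination[of X A r I g \<gamma>] r_bdd g_bdd unfolding u_def by blast
  have s0: "[s0] \<in> hists" by (simp add: hists_def)
  define v where "v a = value_of \<pi> \<beta> \<zeta> x0 u a [s0]" for a
  have v_uc: "prod_uniformly_continuous_on plans v"
    unfolding v_def by (rule prod_uniformly_continuous_on_value_of[OF C s0])
  have v_le: "\<bar>v a\<bar> \<le> C / (1 - \<beta>)" if "a \<in> plans" for a
    unfolding v_def using value_of_abs_le[OF C _ s0] plan_in_actions[OF that] by blast
  define obj where "obj P = lottery_objective \<pi> \<beta> \<zeta> r I g \<gamma> x0 s0 P" for P
  have obj_eq: "obj P = (\<integral>a. v a \<partial>P)" for P
    unfolding obj_def lottery_objective_def u_def v_def ..
  define F where "F = {P \<in> plan_lotteries A \<zeta> p x0. lottery_constraints \<pi> \<beta> A \<zeta> I g gbar x0 P}"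
  show thesis
  proof (rule attains_Sup_if_subsequence_limits[of F obj])
    show "F \<noteq> {}" using exists_feasible_lottery[OF g_bdd feasible] by (auto simp: F_def)
    show "bdd_above (obj ` F)"
      using integral_plan_lottery_le[OF _ v_uc v_le] by (auto simp: F_def obj_eq intro!: bdd_aboveI)
    show "\<exists>r Q. strict_mono r \<and> Q \<in> F \<and> (\<lambda>n. obj (P (r n))) \<longlonglongrightarrow> obj Q"
      if P: "\<And>n. P n \<in> F" for P :: "nat \<Rightarrow> ('s list \<Rightarrow> 'a) measure"
    proof -
      have P_lotteries: "P n \<in> plan_lotteries A \<zeta> p x0"
        and P_constraints: "lottery_constraints \<pi> \<beta> A \<zeta> I g gbar x0 (P n)" for n
        using P[of n] by (simp_all add: F_def)
      show ?thesis
      proof (rule feasible_lotteries_convergent_subsequence[where I=I and g=g and P=P,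
            OF g_bdd P_lotteries P_constraints v_uc v_le])
        fix r Q assume "strict_mono r" "Q \<in> plan_lotteries A \<zeta> p x0"
          "lottery_constraints \<pi> \<beta> A \<zeta> I g gbar x0 Q" "(\<lambda>n. \<integral>a. v a \<partial>P (r n)) \<longlonglongrightarrow> (\<integral>a. v a \<partial>Q)"
        then show ?thesis by (auto simp: F_def obj_eq)
      qed
    qed
  next
    fix Q assume "Q \<in> F" "\<And>P. P \<in> F \<Longrightarrow> obj P \<le> obj Q"
    then show thesis using that by (auto simp: F_def obj_def)
  qed
qed

end

lemma Atil_nonempty_if_feasible_plan:
  assumes "feasible_plan \<pi> \<beta> A \<zeta> p I g gbar x s a"
  shows "Atil A p x s \<noteq> {}"
proof -
  have "[s] \<in> hists" by (simp add: hists_def)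
  then have "a [s] \<in> Atil A p (xpath \<zeta> x a [s]) (last [s])"
    using assms unfolding feasible_plan_def Atil_inf_def by blast
  then show ?thesis by (auto simp: xpath_def)
qed

theorem theorem4p3:
  fixes \<pi> :: "'s::finite \<Rightarrow> 's \<Rightarrow> real"
    and A :: "(real ^ 'n) set"
    and X :: "(real ^ 'm) set"
    and \<zeta> :: "real ^ 'm \<Rightarrow> real ^ 'n \<Rightarrow> 's \<Rightarrow> real ^ 'm"
    and p r :: "real ^ 'm \<Rightarrow> real ^ 'n \<Rightarrow> 's \<Rightarrow> real"
    and I :: nat
    and g :: "nat \<Rightarrow> real ^ 'm \<Rightarrow> real ^ 'n \<Rightarrow> 's \<Rightarrow> real"
    and gbar \<gamma> :: "nat \<Rightarrow> real"
    and \<beta> :: real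
    and x0 :: "real ^ 'm" and s0 :: 's
  assumes pi_pos: "\<And>s s'. \<pi> s s' > 0"
    and pi_sum: "\<And>s. (\<Sum>s'\<in>UNIV. \<pi> s s') = 1"
    and A_fin: "finite A"
    and X_countable: "countable X"
    and zeta_X: "\<And>x b s. x \<in> X \<Longrightarrow> b \<in> A \<Longrightarrow> \<zeta> x b s \<in> X"
    and r_bdd: "\<exists>B. \<forall>x\<in>X. \<forall>b\<in>A. \<forall>s. \<bar>r x b s\<bar> \<le> B"
    and g_bdd: "\<And>i. i < I \<Longrightarrow> \<exists>B. \<forall>x\<in>X. \<forall>b\<in>A. \<forall>s. \<bar>g i x b s\<bar> \<le> B"
    and beta: "0 < \<beta>" "\<beta> < 1"
    and standing: "\<And>x s. x \<in> X \<Longrightarrow> \<exists>a. feasible_plan \<pi> \<beta> A \<zeta> p I g gbar x s a"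
    and x0_X: "x0 \<in> X"
  shows "\<exists>Pstar \<in> plan_lotteries A \<zeta> p x0.
           lottery_constraints \<pi> \<beta> A \<zeta> I g gbar x0 Pstar \<and>
           (\<forall>P \<in> plan_lotteries A \<zeta> p x0. lottery_constraints \<pi> \<beta> A \<zeta> I g gbar x0 P \<longrightarrow>
              lottery_objective \<pi> \<beta> \<zeta> r I g \<gamma> x0 s0 P
                \<le> lottery_objective \<pi> \<beta> \<zeta> r I g \<gamma> x0 s0 Pstar)"
proof -
  interpret lottery_setting \<pi> \<beta> A X \<zeta> p x0
  proof
    show "Atil A p x s \<noteq> {}" if x: "x \<in> X" for x s
    proof -
      obtain a where "feasible_plan \<pi> \<beta> A \<zeta> p I g gbar x s a" using standing[OF x] by blast
      then show ?thesis by (rule Atil_nonempty_if_feasible_plan)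
    qed
  qed (use pi_pos pi_sum A_fin zeta_X beta x0_X in auto)
  obtain Q where "Q \<in> plan_lotteries A \<zeta> p x0" "lottery_constraints \<pi> \<beta> A \<zeta> I g gbar x0 Q"
    "\<And>P. P \<in> plan_lotteries A \<zeta> p x0 \<Longrightarrow> lottery_constraints \<pi> \<beta> A \<zeta> I g gbar x0 P \<Longrightarrow>
       lottery_objective \<pi> \<beta> \<zeta> r I g \<gamma> x0 s0 P \<le> lottery_objective \<pi> \<beta> \<zeta> r I g \<gamma> x0 s0 Q"
    using lottery_problem_has_maximizer[OF r_bdd g_bdd standing[OF x0_X]] by blast
  then show ?thesis by blast
qed

end
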